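(* For all $n\geq 4$, the abelian group $gr^2(P\Sigma_n)=\Gamma_2(P\Sigma_n)/\Gamma_3(P\Sigma_n)$ has rank $$\phi_2(P\Sigma_n)=(n-1)\,r_n(2)=\frac{n(n-1)^2}{2},$$ and the set $\{[\xi_{ij},\xi_{ji}] : 1\leq i<j\leq n\}\cup\{[\xi_{ij},\xi_{it}] : 1\leq i\leq n,\ i\neq j,t,\ 1\leq j<t\leq n\}$ is a basis of it, where $[a,b]$ denotes the class of the commutator $(a,b)$ modulo $\Gamma_3(P\Sigma_n)$.
   Context: $F_n$ is the free group on $x_1,\dots,x_n$. For $1\leq i\neq j\leq n$, $\xi_{ij}=\xi_{i,j}\in\mathrm{Aut}(F_n)$ is given by $\xi_{i,j}(x_i)=x_j^{-1}x_ix_j$, $\xi_{i,j}(x_l)=x_l$ for $l\neq i$; $P\Sigma_n$ is the subgroup of $\mathrm{Aut}(F_n)$ generated by all $\xi_{i,j}$. $\Gamma_k$ denotes the lower central series; $(a,b)=a^{-1}b^{-1}ab$. $r_n(2)=\frac{n^2-n}{2}$ is the rank of $\Gamma_2(F_n)/\Gamma_3(F_n)$. *)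

theory Defs
  imports "HOL-Algebra.Algebra"
begin

text \<open>A letter (i, False) stands for x_i, (i, True) for x_i^{-1}.\<close>
type_synonym word = "(nat \<times> bool) list"

definition inv_letter :: "nat \<times> bool \<Rightarrow> nat \<times> bool" where
  "inv_letter l = (fst l, \<not> snd l)"

definition inv_word :: "word \<Rightarrow> word" where
  "inv_word w = rev (map inv_letter w)"

fun reduce :: "word \<Rightarrow> word" where
  "reduce [] = []"
| "reduce (x # xs) = (case reduce xs of
      [] \<Rightarrow> [x]
    | y # ys \<Rightarrow> (if y = inv_letter x then ys else x # y # ys))"

definition reduced :: "word \<Rightarrow> bool" where
  "reduced w \<longleftrightarrow> reduce w = w"

definition free_group :: "nat \<Rightarrow> word monoid" where
  "free_group n = \<lparr>carrier = {w. reduced w \<and> fst ` set w \<subseteq> {1..n}},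
                   monoid.mult = (\<lambda>u v. reduce (u @ v)),
                   one = []\<rparr>"

definition subst :: "(nat \<Rightarrow> word) \<Rightarrow> word \<Rightarrow> word" where
  "subst f w = reduce (concat (map (\<lambda>l. if snd l then inv_word (f (fst l)) else f (fst l)) w))"

text \<open>xi_{i,j}: x_i \<mapsto> x_j^{-1} x_i x_j, x_l \<mapsto> x_l for l \<noteq> i, as an element of Aut(F_n)
  (extensional function on the carrier, as in HOL-Algebra's AutoGroup).\<close>
definition xi :: "nat \<Rightarrow> nat \<Rightarrow> nat \<Rightarrow> (word \<Rightarrow> word)" where
  "xi n i j = (\<lambda>w \<in> carrier (free_group n).
      subst (\<lambda>k. if k = i then [(j, True), (i, False), (j, False)] else [(k, False)]) w)"

definition PSigma :: "nat \<Rightarrow> (word \<Rightarrow> word) monoid" where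
  "PSigma n = (AutoGroup (free_group n))\<lparr>carrier :=
      generate (AutoGroup (free_group n))
        {xi n i j | i j. i \<in> {1..n} \<and> j \<in> {1..n} \<and> i \<noteq> j}\<rparr>"

definition comm :: "('a, 'b) monoid_scheme \<Rightarrow> 'a \<Rightarrow> 'a \<Rightarrow> 'a" where
  "comm G a b = inv\<^bsub>G\<^esub> a \<otimes>\<^bsub>G\<^esub> inv\<^bsub>G\<^esub> b \<otimes>\<^bsub>G\<^esub> a \<otimes>\<^bsub>G\<^esub> b"

text \<open>Lower central series: \<Gamma>_1 = G, \<Gamma>_{k+1} = (G, \<Gamma>_k). (Index 0 also gives G.)\<close>
fun lcs :: "('a, 'b) monoid_scheme \<Rightarrow> nat \<Rightarrow> 'a set" where
  "lcs G 0 = carrier G"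
| "lcs G (Suc 0) = carrier G"
| "lcs G (Suc (Suc k)) =
     generate G {comm G a b | a b. a \<in> carrier G \<and> b \<in> lcs G (Suc k)}"

definition gr2 :: "('a, 'b) monoid_scheme \<Rightarrow> 'a set monoid" where
  "gr2 G = (G\<lparr>carrier := lcs G 2\<rparr>) Mod (lcs G 3)"

definition comm_class :: "('a, 'b) monoid_scheme \<Rightarrow> 'a \<Rightarrow> 'a \<Rightarrow> 'a set" where
  "comm_class G a b = lcs G 3 #>\<^bsub>G\<^esub> comm G a b"

definition abelian_basis :: "('a, 'b) monoid_scheme \<Rightarrow> 'a set \<Rightarrow> bool" where
  "abelian_basis Q B \<longleftrightarrow> finite B \<and> B \<subseteq> carrier Q \<and>
     (\<forall>g \<in> carrier Q. \<exists>!c :: 'a \<Rightarrow> int. c \<in> extensional B \<and>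
         g = finprod Q (\<lambda>b. b [^]\<^bsub>Q\<^esub> c b) B)"

definition r_n :: "nat \<Rightarrow> nat \<Rightarrow> nat" where
  "r_n n k = (if k = 2 then (n^2 - n) div 2 else undefined)"

end

theory Submission
  imports Defs
begin

text \<open>
  Spanning: \<open>gr\<^sup>2\<close> is abelian and generated by the classes \<open>[\<xi>\<^sub>a\<^sub>b, \<xi>\<^sub>c\<^sub>d]\<close> of commutators of
  generators.  Those with \<open>{c, d} \<inter> {a, b} = {}\<close> or \<open>d = b \<noteq> c\<close> vanish because the generators
  commute, and the McCool relation \<open>(\<xi>\<^sub>a\<^sub>d \<xi>\<^sub>b\<^sub>d) \<xi>\<^sub>a\<^sub>b = \<xi>\<^sub>a\<^sub>b (\<xi>\<^sub>a\<^sub>d \<xi>\<^sub>b\<^sub>d)\<close> together with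
  bilinearity gives \<open>[\<xi>\<^sub>a\<^sub>b, \<xi>\<^sub>b\<^sub>d] = [\<xi>\<^sub>a\<^sub>d, \<xi>\<^sub>a\<^sub>b]\<close>; so the listed classes span.

  Independence: send \<open>\<phi> \<in> P\<Sigma>\<^sub>n\<close> to its Fox Jacobian \<open>(\<partial>\<phi>(x\<^sub>i)/\<partial>x\<^sub>j)\<close>, evaluated in
  \<open>\<int>[t\<^sub>1, \<dots>, t\<^sub>n]/(t)\<^sup>3\<close> via \<open>x\<^sub>k \<mapsto> 1 + t\<^sub>k\<close>.  As \<open>\<phi>\<close> induces the identity on the
  abelianisation, the chain rule makes this an anti-homomorphism whose constant part is the identity
  matrix.  Hence its linear part is additive and kills \<open>\<Gamma>\<^sub>2\<close>, and its quadratic part is additive on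
  \<open>\<Gamma>\<^sub>2\<close> and kills \<open>\<Gamma>\<^sub>3\<close>; this gives homomorphisms \<open>gr\<^sup>2(P\<Sigma>\<^sub>n) \<rightarrow> \<int>\<close>.  Computing the
  quadratic parts of the listed commutators, each has a coordinate at which all the others vanish.
\<close>

section \<open>Commutators and the lower central series\<close>

context group
begin

lemma inv_mult_cancel_left: "g \<in> carrier G \<Longrightarrow> x \<in> carrier G \<Longrightarrow> inv g \<otimes> (g \<otimes> x) = x"
  by (simp add: m_assoc[symmetric])

lemma mult_inv_cancel_left: "g \<in> carrier G \<Longrightarrow> x \<in> carrier G \<Longrightarrow> g \<otimes> (inv g \<otimes> x) = x"
  by (simp add: m_assoc[symmetric])

lemma comm_closed [simp]: "a \<in> carrier G \<Longrightarrow> b \<in> carrier G \<Longrightarrow> comm G a b \<in> carrier G"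
  by (simp add: comm_def)

lemma comm_eq: "a \<in> carrier G \<Longrightarrow> b \<in> carrier G \<Longrightarrow> comm G a b = inv a \<otimes> (inv b \<otimes> (a \<otimes> b))"
  by (simp add: comm_def m_assoc)

lemma comm_conj:
  assumes "g \<in> carrier G" "a \<in> carrier G" "b \<in> carrier G"
  shows "g \<otimes> comm G a b \<otimes> inv g = comm G (g \<otimes> a \<otimes> inv g) (g \<otimes> b \<otimes> inv g)"
  using assms by (simp add: comm_eq inv_mult_group m_assoc inv_mult_cancel_left mult_inv_cancel_left)

lemma inv_comm_swap: "a \<in> carrier G \<Longrightarrow> b \<in> carrier G \<Longrightarrow> inv (comm G a b) = comm G b a"
  by (simp add: comm_eq inv_mult_group m_assoc)

lemma comm_mult_left:
  assumes "x \<in> carrier G" "y \<in> carrier G" "b \<in> carrier G"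
  shows "comm G (x \<otimes> y) b = (inv y \<otimes> comm G x b \<otimes> y) \<otimes> comm G y b"
  using assms by (simp add: comm_eq inv_mult_group m_assoc inv_mult_cancel_left mult_inv_cancel_left)

lemma comm_inv_left:
  assumes "x \<in> carrier G" "b \<in> carrier G"
  shows "comm G (inv x) b = inv (inv x) \<otimes> inv (comm G x b) \<otimes> inv x"
  using assms by (simp add: comm_eq inv_mult_group m_assoc inv_mult_cancel_left mult_inv_cancel_left)

lemma conj_eq_mult_comm:
  assumes "c \<in> carrier G" "y \<in> carrier G"
  shows "inv y \<otimes> c \<otimes> y = c \<otimes> comm G c y"
  using assms by (simp add: comm_eq m_assoc mult_inv_cancel_left)

lemma comm_eq_one_if_commute:
  assumes "x \<in> carrier G" "y \<in> carrier G" "x \<otimes> y = y \<otimes> x"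
  shows "comm G x y = \<one>"
  using assms by (simp add: comm_eq m_assoc[symmetric])

lemma mult_eq_mult_comm: "x \<in> carrier G \<Longrightarrow> y \<in> carrier G \<Longrightarrow> x \<otimes> y = y \<otimes> x \<otimes> comm G x y"
  by (simp add: comm_eq m_assoc mult_inv_cancel_left)

lemma comm_eq_inv_mult: "a \<in> carrier G \<Longrightarrow> b \<in> carrier G \<Longrightarrow> comm G a b = inv (b \<otimes> a) \<otimes> (a \<otimes> b)"
  by (simp add: comm_def inv_mult_group m_assoc)

lemma lcs_2: "lcs G 2 = generate G {comm G a b | a b. a \<in> carrier G \<and> b \<in> carrier G}"
  by (simp add: numeral_2_eq_2)

lemma lcs_3: "lcs G 3 = generate G {comm G a b | a b. a \<in> carrier G \<and> b \<in> lcs G 2}"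
  by (simp add: numeral_3_eq_3 numeral_2_eq_2)

lemma subgroup_lcs_2: "subgroup (lcs G 2) G"
  unfolding lcs_2 by (rule generate_is_subgroup) auto

lemma lcs_2_subset: "x \<in> lcs G 2 \<Longrightarrow> x \<in> carrier G"
  using subgroup.subset[OF subgroup_lcs_2] by blast

lemma comm_in_lcs_2: "a \<in> carrier G \<Longrightarrow> b \<in> carrier G \<Longrightarrow> comm G a b \<in> lcs G 2"
  unfolding lcs_2 by (rule generate.incl) blast

lemma comm_in_lcs_3: "a \<in> carrier G \<Longrightarrow> b \<in> lcs G 2 \<Longrightarrow> comm G a b \<in> lcs G 3"
  unfolding lcs_3 by (rule generate.incl) blast

lemma lcs_3_gens_subset: "{comm G a b | a b. a \<in> carrier G \<and> b \<in> lcs G 2} \<subseteq> lcs G 2"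
  using comm_in_lcs_2 lcs_2_subset by blast

lemma subgroup_lcs_3: "subgroup (lcs G 3) G"
  unfolding lcs_3 using lcs_3_gens_subset lcs_2_subset by (intro generate_is_subgroup) blast

lemma lcs_3_subset_lcs_2: "lcs G 3 \<subseteq> lcs G 2"
  unfolding lcs_3 by (rule generate_subgroup_incl[OF lcs_3_gens_subset subgroup_lcs_2])

lemma normal_lcs_2: "lcs G 2 \<lhd> G"
  unfolding lcs_2
proof (rule normal_generateI)
  fix h g assume "h \<in> {comm G a b | a b. a \<in> carrier G \<and> b \<in> carrier G}" and g: "g \<in> carrier G"
  then obtain a b where "h = comm G a b" "a \<in> carrier G" "b \<in> carrier G" by blast
  then show "g \<otimes> h \<otimes> inv g \<in> {comm G a b | a b. a \<in> carrier G \<and> b \<in> carrier G}"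
    using comm_conj[OF g] g by blast
qed auto

lemma normal_lcs_3: "lcs G 3 \<lhd> G"
  unfolding lcs_3
proof (rule normal_generateI)
  fix h g assume "h \<in> {comm G a b | a b. a \<in> carrier G \<and> b \<in> lcs G 2}" and g: "g \<in> carrier G"
  then obtain a b where ab: "h = comm G a b" "a \<in> carrier G" "b \<in> lcs G 2" by blast
  have "g \<otimes> b \<otimes> inv g \<in> lcs G 2"
    using normal_inv_iff[of "lcs G 2"] normal_lcs_2 g ab(3) by blast
  then show "g \<otimes> h \<otimes> inv g \<in> {comm G a b | a b. a \<in> carrier G \<and> b \<in> lcs G 2}"
    using comm_conj[OF g ab(2) lcs_2_subset[OF ab(3)]] ab g by blast
qed (use lcs_3_gens_subset lcs_2_subset in auto)

section \<open>The abelian group \<open>gr\<^sup>2 G\<close>\<close>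

lemma group_gr2: "group (gr2 G)"
  unfolding gr2_def
  by (intro normal.factorgroup_is_group normal_restrict_supergroup[OF subgroup_lcs_2 normal_lcs_3]
      lcs_3_subset_lcs_2)

lemma carrier_gr2: "carrier (gr2 G) = (\<lambda>x. lcs G 3 #> x) ` lcs G 2"
  unfolding gr2_def carrier_FactGroup by (simp add: r_coset_def[abs_def])

lemma mult_gr2: "U \<otimes>\<^bsub>gr2 G\<^esub> V = U <#> V"
  by (simp add: gr2_def set_mult_def[abs_def])

lemma gr2_coset_in: "x \<in> lcs G 2 \<Longrightarrow> lcs G 3 #> x \<in> carrier (gr2 G)"
  by (simp add: carrier_gr2)

lemma gr2_coset_mult:
  "x \<in> lcs G 2 \<Longrightarrow> y \<in> lcs G 2 \<Longrightarrow> lcs G 3 #> (x \<otimes> y) = (lcs G 3 #> x) \<otimes>\<^bsub>gr2 G\<^esub> (lcs G 3 #> y)"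
  using normal.rcos_sum[OF normal_lcs_3 lcs_2_subset lcs_2_subset] by (simp add: mult_gr2)

lemma gr2_coset_lcs_3: "h \<in> lcs G 3 \<Longrightarrow> lcs G 3 #> h = \<one>\<^bsub>gr2 G\<^esub>"
  using subgroup.rcos_const[OF subgroup_lcs_3 is_group] by (simp add: gr2_def)

lemma gr2_coset_one: "lcs G 3 #> \<one> = \<one>\<^bsub>gr2 G\<^esub>"
  by (rule gr2_coset_lcs_3[OF subgroup.one_closed[OF subgroup_lcs_3]])

lemma gr2_coset_inv:
  assumes "x \<in> lcs G 2"
  shows "lcs G 3 #> inv x = inv\<^bsub>gr2 G\<^esub> (lcs G 3 #> x)"
proof -
  have ix: "inv x \<in> lcs G 2"
    using subgroup.m_inv_closed[OF subgroup_lcs_2 assms] .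
  have "(lcs G 3 #> inv x) \<otimes>\<^bsub>gr2 G\<^esub> (lcs G 3 #> x) = \<one>\<^bsub>gr2 G\<^esub>"
    using gr2_coset_mult[OF ix assms, symmetric] lcs_2_subset[OF assms] gr2_coset_one by simp
  then show ?thesis
    using group.inv_equality[OF group_gr2] gr2_coset_in[OF ix] gr2_coset_in[OF assms] by metis
qed

lemma gr2_coset_mult_lcs_3:
  assumes "x \<in> lcs G 2" "h \<in> lcs G 3"
  shows "lcs G 3 #> (x \<otimes> h) = lcs G 3 #> x"
  using gr2_coset_mult[OF assms(1)] lcs_3_subset_lcs_2 assms gr2_coset_lcs_3
    monoid.r_one[OF group.is_monoid[OF group_gr2] gr2_coset_in[OF assms(1)]] by auto

text \<open>Conjugation acts trivially on \<open>gr\<^sup>2 G\<close> since \<open>(c, y) \<in> \<Gamma>\<^sub>3\<close> for \<open>c \<in> \<Gamma>\<^sub>2\<close>.\<close>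

lemma gr2_coset_conj:
  assumes "c \<in> lcs G 2" "y \<in> carrier G"
  shows "lcs G 3 #> (inv y \<otimes> c \<otimes> y) = lcs G 3 #> c"
proof -
  have c: "c \<in> carrier G" using lcs_2_subset[OF assms(1)] .
  have "comm G c y \<in> lcs G 3"
    using inv_comm_swap[OF assms(2) c] comm_in_lcs_3[OF assms(2,1)]
      subgroup.m_inv_closed[OF subgroup_lcs_3] by metis
  then show ?thesis
    using conj_eq_mult_comm[OF c assms(2)] gr2_coset_mult_lcs_3[OF assms(1)] by simp
qed

lemma comm_group_gr2: "comm_group (gr2 G)"
proof (rule group.group_comm_groupI[OF group_gr2])
  fix U V assume "U \<in> carrier (gr2 G)" "V \<in> carrier (gr2 G)"
  then obtain x y where xy: "x \<in> lcs G 2" "y \<in> lcs G 2" "U = lcs G 3 #> x" "V = lcs G 3 #> y"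
    by (auto simp: carrier_gr2)
  have xc: "x \<in> carrier G" "y \<in> carrier G"
    using xy lcs_2_subset by auto
  have "U \<otimes>\<^bsub>gr2 G\<^esub> V = lcs G 3 #> (x \<otimes> y)"
    using gr2_coset_mult xy by simp
  also have "\<dots> = lcs G 3 #> (y \<otimes> x \<otimes> comm G x y)"
    using mult_eq_mult_comm[OF xc] by simp
  also have "\<dots> = lcs G 3 #> (y \<otimes> x)"
    using gr2_coset_mult_lcs_3 subgroup.m_closed[OF subgroup_lcs_2 xy(2,1)] comm_in_lcs_3[OF xc(1) xy(2)] .
  also have "\<dots> = V \<otimes>\<^bsub>gr2 G\<^esub> U"
    using gr2_coset_mult xy by simp
  finally show "U \<otimes>\<^bsub>gr2 G\<^esub> V = V \<otimes>\<^bsub>gr2 G\<^esub> U" .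
qed

lemma comm_class_in_gr2: "a \<in> carrier G \<Longrightarrow> b \<in> carrier G \<Longrightarrow> comm_class G a b \<in> carrier (gr2 G)"
  unfolding comm_class_def by (intro gr2_coset_in comm_in_lcs_2)

lemma comm_class_swap:
  "a \<in> carrier G \<Longrightarrow> b \<in> carrier G \<Longrightarrow> comm_class G a b = inv\<^bsub>gr2 G\<^esub> (comm_class G b a)"
proof -
  assume a: "a \<in> carrier G" and b: "b \<in> carrier G"
  then have "comm_class G a b = lcs G 3 #> inv (comm G b a)"
    using inv_comm_swap[OF b a] by (simp add: comm_class_def)
  then show ?thesis
    using gr2_coset_inv[OF comm_in_lcs_2[OF b a]] by (simp add: comm_class_def)
qed

lemma comm_class_eq_one:
  "a \<in> carrier G \<Longrightarrow> b \<in> carrier G \<Longrightarrow> a \<otimes> b = b \<otimes> a \<Longrightarrow> comm_class G a b = \<one>\<^bsub>gr2 G\<^esub>"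
  unfolding comm_class_def by (simp add: comm_eq_one_if_commute gr2_coset_one)

lemma comm_class_mult_left:
  assumes x: "x \<in> carrier G" and y: "y \<in> carrier G" and b: "b \<in> carrier G"
  shows "comm_class G (x \<otimes> y) b = comm_class G x b \<otimes>\<^bsub>gr2 G\<^esub> comm_class G y b"
proof -
  have conj: "inv y \<otimes> comm G x b \<otimes> y \<in> lcs G 2"
    using normal_inv_iff[of "lcs G 2"] normal_lcs_2 inv_closed[OF y] comm_in_lcs_2[OF x b] y
    by (metis inv_inv)
  have "comm_class G (x \<otimes> y) b
      = (lcs G 3 #> (inv y \<otimes> comm G x b \<otimes> y)) \<otimes>\<^bsub>gr2 G\<^esub> comm_class G y b"
    using comm_mult_left[OF x y b] gr2_coset_mult[OF conj comm_in_lcs_2[OF y b]]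
    by (simp add: comm_class_def)
  then show ?thesis
    using gr2_coset_conj[OF comm_in_lcs_2[OF x b] y] by (simp add: comm_class_def)
qed

lemma comm_class_inv_left:
  assumes x: "x \<in> carrier G" and b: "b \<in> carrier G"
  shows "comm_class G (inv x) b = inv\<^bsub>gr2 G\<^esub> (comm_class G x b)"
proof -
  have "inv (comm G x b) \<in> lcs G 2"
    using subgroup.m_inv_closed[OF subgroup_lcs_2 comm_in_lcs_2[OF x b]] .
  then have "comm_class G (inv x) b = lcs G 3 #> inv (comm G x b)"
    using comm_inv_left[OF x b] gr2_coset_conj[OF _ inv_closed[OF x]] by (simp add: comm_class_def)
  then show ?thesis
    using gr2_coset_inv[OF comm_in_lcs_2[OF x b]] by (simp add: comm_class_def)
qed

lemma comm_class_left_in_subgroup: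
  assumes S: "subgroup S (gr2 G)" and T: "T \<subseteq> carrier G" and b: "b \<in> carrier G"
    and base: "\<And>s. s \<in> T \<Longrightarrow> comm_class G s b \<in> S"
    and a: "a \<in> generate G T"
  shows "comm_class G a b \<in> S"
  using a
proof (induction rule: generate.induct)
  case one
  then show ?case
    using comm_class_eq_one[OF one_closed b] subgroup.one_closed[OF S] b by simp
next
  case (incl h)
  then show ?case by (rule base)
next
  case (inv h)
  then have "h \<in> carrier G" using T by blast
  then show ?case
    using comm_class_inv_left[OF _ b] subgroup.m_inv_closed[OF S base[OF inv]] by simp
next
  case (eng h1 h2)
  then have "h1 \<in> carrier G" "h2 \<in> carrier G"
    using generate_in_carrier[OF T] by auto
  then show ?case
    using comm_class_mult_left[OF _ _ b] subgroup.m_closed[OF S eng.IH] by simp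
qed

lemma gr2_subset_subgroupI:
  assumes S: "subgroup S (gr2 G)"
    and comms: "\<And>a b. a \<in> carrier G \<Longrightarrow> b \<in> carrier G \<Longrightarrow> comm_class G a b \<in> S"
  shows "carrier (gr2 G) \<subseteq> S"
proof
  fix Z assume "Z \<in> carrier (gr2 G)"
  then obtain z where z: "z \<in> lcs G 2" "Z = lcs G 3 #> z"
    by (auto simp: carrier_gr2)
  from z(1) have "lcs G 3 #> z \<in> S"
    unfolding lcs_2
  proof (induction rule: generate.induct)
    case one
    then show ?case using gr2_coset_one subgroup.one_closed[OF S] by simp
  next
    case (incl h)
    then obtain a b where "h = comm G a b" "a \<in> carrier G" "b \<in> carrier G" by blast
    then show ?case using comms by (simp add: comm_class_def)
  next
    case (inv h)
    then obtain a b where ab: "h = comm G a b" "a \<in> carrier G" "b \<in> carrier G" by blast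
    then have "lcs G 3 #> inv h = inv\<^bsub>gr2 G\<^esub> (comm_class G a b)"
      using gr2_coset_inv[OF comm_in_lcs_2] by (simp add: comm_class_def)
    then show ?case
      using subgroup.m_inv_closed[OF S comms[OF ab(2,3)]] by simp
  next
    case (eng h1 h2)
    then have "h1 \<in> lcs G 2" "h2 \<in> lcs G 2" by (simp_all add: lcs_2)
    then show ?case
      using gr2_coset_mult subgroup.m_closed[OF S eng.IH] by simp
  qed
  then show "Z \<in> S" using z by simp
qed

lemma gr2_subset_subgroup_gens:
  assumes S: "subgroup S (gr2 G)" and gen: "carrier G = generate G T" and T: "T \<subseteq> carrier G"
    and base: "\<And>s t. s \<in> T \<Longrightarrow> t \<in> T \<Longrightarrow> comm_class G s t \<in> S"
  shows "carrier (gr2 G) \<subseteq> S"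
proof (rule gr2_subset_subgroupI[OF S])
  have swap: "comm_class G a b \<in> S"
    if "comm_class G b a \<in> S" "a \<in> carrier G" "b \<in> carrier G" for a b
    using comm_class_swap[OF that(2,3)] subgroup.m_inv_closed[OF S that(1)] by simp
  have gen_left: "comm_class G s b \<in> S" if "s \<in> T" "b \<in> carrier G" for s b
  proof (rule swap)
    show "comm_class G b s \<in> S"
      by (rule comm_class_left_in_subgroup[OF S T]) (use that T gen base in auto)
  qed (use that T in auto)
  show "comm_class G a b \<in> S" if "a \<in> carrier G" "b \<in> carrier G" for a b
    by (rule comm_class_left_in_subgroup[OF S T that(2)]) (use gen_left that gen in auto)
qed

end

lemma (in comm_group) generate_eq_finprod_int_pow:
  assumes B: "finite B" "B \<subseteq> carrier G" and x: "x \<in> generate G B"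
  shows "\<exists>c :: _ \<Rightarrow> int. x = finprod G (\<lambda>b. b [^] c b) B"
  using x
proof (induction rule: generate.induct)
  case one
  show ?case by (rule exI[of _ "\<lambda>_. 0"]) (simp add: finprod_one_eqI)
next
  case (incl h)
  have "finprod G (\<lambda>b. b [^] (if h = b then 1 else 0 :: int)) B = finprod G (\<lambda>b. if h = b then b else \<one>) B"
    using B by (intro finprod_cong') auto
  then show ?case
    using finprod_singleton[of h B "\<lambda>b. b", OF incl B(1)] B(2)
    by (intro exI[of _ "\<lambda>b. if h = b then 1 else 0"]) (auto simp: Pi_iff subset_iff)
next
  case (inv h)
  have "finprod G (\<lambda>b. b [^] (if h = b then - 1 else 0 :: int)) B
      = finprod G (\<lambda>b. if h = b then inv b else \<one>) B"
    using B by (intro finprod_cong') (auto simp: int_pow_neg)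
  then show ?case
    using finprod_singleton[of h B "\<lambda>b. inv b", OF inv B(1)] B(2)
    by (intro exI[of _ "\<lambda>b. if h = b then - 1 else 0"]) (auto simp: Pi_iff subset_iff)
next
  case (eng h1 h2)
  then obtain c1 c2 :: "_ \<Rightarrow> int"
    where "h1 = finprod G (\<lambda>b. b [^] c1 b) B" "h2 = finprod G (\<lambda>b. b [^] c2 b) B"
    by blast
  moreover have "finprod G (\<lambda>b. b [^] (c1 b + c2 b)) B
      = finprod G (\<lambda>b. b [^] c1 b \<otimes> b [^] c2 b) B"
    using B by (intro finprod_cong') (auto simp: int_pow_mult)
  moreover have "\<dots> = finprod G (\<lambda>b. b [^] c1 b) B \<otimes> finprod G (\<lambda>b. b [^] c2 b) B"
    using B by (intro finprod_multf) auto
  ultimately show ?case by (intro exI[of _ "\<lambda>b. c1 b + c2 b"]) simp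
qed

lemma hom_integer_group_finprod:
  assumes "comm_group Q" "h \<in> hom Q integer_group" "finite A" "g \<in> A \<rightarrow> carrier Q"
  shows "h (finprod Q g A) = (\<Sum>a\<in>A. h (g a))"
  using assms(3,4)
proof (induction A rule: finite_induct)
  case empty
  interpret comm_group Q by fact
  interpret group_hom Q integer_group h
    using assms by (simp add: group_hom_def group_hom_axioms_def is_group)
  show ?case using hom_one by simp
next
  case (insert a A)
  interpret comm_group Q by fact
  show ?case
    using insert hom_mult[OF assms(2)] by simp
qed

section \<open>The free group as reduced words\<close>

lemma inv_letter_inv [simp]: "inv_letter (inv_letter x) = x"
  by (simp add: inv_letter_def)

lemma inv_letter_pair [simp]: "inv_letter (k, b) = (k, \<not> b)"
  by (simp add: inv_letter_def)

fun cancellation_free :: "word \<Rightarrow> bool" where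
  "cancellation_free (x # y # ys) \<longleftrightarrow> y \<noteq> inv_letter x \<and> cancellation_free (y # ys)"
| "cancellation_free _ \<longleftrightarrow> True"

lemma cancellation_free_tl: "cancellation_free (x # xs) \<Longrightarrow> cancellation_free xs"
  by (cases xs) auto

lemma cancellation_free_reduce: "cancellation_free (reduce w)"
  by (induction w) (auto split: list.split dest: cancellation_free_tl)

lemma reduce_cancellation_free: "cancellation_free w \<Longrightarrow> reduce w = w"
  by (induction w rule: cancellation_free.induct) auto

lemma reduced_iff_cancellation_free: "reduced w \<longleftrightarrow> cancellation_free w"
  by (metis cancellation_free_reduce reduce_cancellation_free reduced_def)

lemma reduce_idem [simp]: "reduce (reduce w) = reduce w"
  by (simp add: cancellation_free_reduce reduce_cancellation_free)

lemma reduce_append_right: "reduce (u @ reduce v) = reduce (u @ v)"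
  by (induction u) auto

lemma reduce_Cons_reduce: "reduce (x # reduce v) = reduce (x # v)"
  using reduce_append_right[of "[x]" v] by simp

lemma reduce_cancel: "reduce (x # inv_letter x # v) = reduce v"
proof (cases "reduce v")
  case (Cons y ys)
  then have "cancellation_free (y # ys)" by (metis cancellation_free_reduce)
  with Cons show ?thesis by (cases "y = x"; cases ys) auto
qed simp

lemma reduce_reduce_Cons_append: "reduce (reduce (x # u) @ v) = reduce (x # reduce u @ v)"
proof (cases "reduce u")
  case (Cons y ys)
  show ?thesis
  proof (cases "y = inv_letter x")
    case True
    then have "reduce (x # reduce u @ v) = reduce (ys @ v)"
      using Cons by (simp only: append_Cons reduce_cancel)
    then show ?thesis using Cons True by simp
  qed (use Cons in simp)
qed simp

lemma reduce_append_left: "reduce (reduce u @ v) = reduce (u @ v)"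
proof (induction u)
  case (Cons x u)
  have "reduce (reduce (x # u) @ v) = reduce (x # reduce (reduce u @ v))"
    by (simp only: reduce_reduce_Cons_append reduce_Cons_reduce)
  also have "\<dots> = reduce ((x # u) @ v)"
    by (simp only: Cons.IH reduce_Cons_reduce append_Cons)
  finally show ?case .
qed simp

lemma reduce_invariant:
  assumes cancel: "\<And>x w. g (x # inv_letter x # w) = g w"
    and cong: "\<And>x u v. g u = g v \<Longrightarrow> g (x # u) = g (x # v)"
  shows "g (reduce w) = g w"
proof (induction w)
  case (Cons x w)
  have "g (x # reduce w) = g (x # w)"
    using Cons.IH by (rule cong)
  then show ?case
    by (cases "reduce w") (auto simp: cancel)
qed simp

lemma reduce_append: "reduce (reduce u @ reduce v) = reduce (u @ v)"
  by (simp add: reduce_append_left reduce_append_right)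

lemma set_reduce: "set (reduce w) \<subseteq> set w"
  by (induction w) (auto split: list.split)

lemma inv_word_Nil [simp]: "inv_word [] = []"
  by (simp add: inv_word_def)

lemma inv_word_Cons: "inv_word (x # w) = inv_word w @ [inv_letter x]"
  by (simp add: inv_word_def)

lemma inv_word_inv_word [simp]: "inv_word (inv_word w) = w"
  by (simp add: inv_word_def rev_map comp_def)

lemma fst_set_inv_word [simp]: "fst ` set (inv_word w) = fst ` set w"
  by (simp add: inv_word_def image_image inv_letter_def)

lemma reduce_cancel_word: "reduce (w @ inv_word w @ v) = reduce v"
proof (induction w arbitrary: v)
  case (Cons x w)
  have "reduce ((x # w) @ inv_word (x # w) @ v) = reduce (x # reduce (w @ inv_word w @ inv_letter x # v))"
    by (simp add: inv_word_Cons reduce_Cons_reduce)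
  also have "\<dots> = reduce v"
    by (metis Cons.IH reduce_Cons_reduce reduce_cancel)
  finally show ?case .
qed simp

lemma reduce_inv_word_cancel: "reduce (inv_word w @ w @ v) = reduce v"
  using reduce_cancel_word[of "inv_word w" v] by simp

lemma reduce_inv_word_self: "reduce (inv_word w @ w) = []"
  using reduce_inv_word_cancel[of w "[]"] by simp

lemma cancellation_free_append:
  "cancellation_free (xs @ ys) \<longleftrightarrow> cancellation_free xs \<and> cancellation_free ys \<and>
     (xs \<noteq> [] \<and> ys \<noteq> [] \<longrightarrow> hd ys \<noteq> inv_letter (last xs))"
  by (induction xs rule: cancellation_free.induct; cases ys) auto

lemma cancellation_free_inv_word: "cancellation_free w \<Longrightarrow> cancellation_free (inv_word w)"
proof (induction w rule: cancellation_free.induct)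
  case (1 x y ys)
  have "last (inv_word (y # ys)) = inv_letter y"
    by (simp add: inv_word_def)
  with 1 show ?case
    by (auto simp: inv_word_Cons cancellation_free_append inv_letter_def prod_eq_iff)
qed (simp_all add: inv_word_def)

abbreviation F :: "nat \<Rightarrow> word monoid" where
  "F n \<equiv> free_group n"

lemma carrier_free_group: "w \<in> carrier (F n) \<longleftrightarrow> reduced w \<and> fst ` set w \<subseteq> {1..n}"
  by (simp add: free_group_def)

lemma mult_free_group [simp]: "u \<otimes>\<^bsub>F n\<^esub> v = reduce (u @ v)"
  by (simp add: free_group_def)

lemma one_free_group [simp]: "\<one>\<^bsub>F n\<^esub> = []"
  by (simp add: free_group_def)

lemma inv_word_in_free_group: "w \<in> carrier (F n) \<Longrightarrow> inv_word w \<in> carrier (F n)"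
  by (simp add: carrier_free_group reduced_iff_cancellation_free cancellation_free_inv_word)

lemma letter_in_free_group: "k \<in> {1..n} \<Longrightarrow> [(k, b)] \<in> carrier (F n)"
  by (simp add: carrier_free_group reduced_def)

lemma group_free_group: "group (F n)"
proof (rule groupI)
  fix x y assume "x \<in> carrier (F n)" "y \<in> carrier (F n)"
  then show "x \<otimes>\<^bsub>F n\<^esub> y \<in> carrier (F n)"
    using image_mono[OF set_reduce, of fst "x @ y"] by (fastforce simp: carrier_free_group reduced_def)
next
  fix x assume "x \<in> carrier (F n)"
  then show "\<exists>y\<in>carrier (F n). y \<otimes>\<^bsub>F n\<^esub> x = \<one>\<^bsub>F n\<^esub>"
    using inv_word_in_free_group reduce_inv_word_self by fastforce
qed (auto simp: carrier_free_group reduced_def reduce_append_left reduce_append_right)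

lemma inv_free_group: "w \<in> carrier (F n) \<Longrightarrow> inv\<^bsub>F n\<^esub> w = inv_word w"
  by (rule group.inv_equality[OF group_free_group])
    (auto simp: reduce_inv_word_self inv_word_in_free_group)

section \<open>Substitution endomorphisms\<close>

definition letter_image :: "(nat \<Rightarrow> word) \<Rightarrow> nat \<times> bool \<Rightarrow> word" where
  "letter_image f l = (if snd l then inv_word (f (fst l)) else f (fst l))"

lemma subst_letter_image: "subst f w = reduce (concat (map (letter_image f) w))"
  by (simp add: subst_def letter_image_def[abs_def])

lemma letter_image_inv_letter: "letter_image f (inv_letter l) = inv_word (letter_image f l)"
  by (simp add: letter_image_def inv_letter_def)

lemma subst_reduce: "subst f (reduce w) = subst f w"
proof (rule reduce_invariant)
  fix x w
  show "subst f (x # inv_letter x # w) = subst f w"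
    by (simp add: subst_letter_image letter_image_inv_letter reduce_cancel_word)
next
  fix x u v
  assume "subst f u = subst f v"
  then show "subst f (x # u) = subst f (x # v)"
    by (metis subst_letter_image reduce_append_right concat.simps(2) list.simps(9))
qed

lemma subst_append: "subst f (u @ v) = reduce (subst f u @ subst f v)"
  by (simp add: subst_letter_image reduce_append)

lemma subst_in_free_group:
  assumes "\<And>k. k \<in> {1..n} \<Longrightarrow> f k \<in> carrier (F n)" and "w \<in> carrier (F n)"
  shows "subst f w \<in> carrier (F n)"
proof -
  have "fst ` set (letter_image f l) \<subseteq> {1..n}" if "l \<in> set w" for l
  proof -
    have "fst l \<in> {1..n}" using that assms(2) by (auto simp: carrier_free_group)
    then show ?thesis using assms(1)[of "fst l"] by (simp add: letter_image_def carrier_free_group)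
  qed
  then have "fst ` set (concat (map (letter_image f) w)) \<subseteq> {1..n}"
    by auto
  then have "fst ` set (reduce (concat (map (letter_image f) w))) \<subseteq> {1..n}"
    using image_mono[OF set_reduce, of fst] by blast
  then show ?thesis
    by (simp add: subst_letter_image carrier_free_group reduced_def)
qed

lemma subst_hom:
  assumes "\<And>k. k \<in> {1..n} \<Longrightarrow> f k \<in> carrier (F n)"
  shows "subst f \<in> hom (F n) (F n)"
proof (rule homI)
  show "subst f x \<in> carrier (F n)" if "x \<in> carrier (F n)" for x
    using assms that by (rule subst_in_free_group)
qed (simp add: subst_reduce subst_append)

lemma restrict_hom_free_group:
  "h \<in> hom (F n) (F n) \<Longrightarrow> (\<lambda>x\<in>carrier (F n). h x) \<in> hom (F n) (F n)"
  using monoid.m_closed[OF group.is_monoid[OF group_free_group]]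
  by (auto simp: hom_def Pi_iff)

lemma subst_single: "subst f [(k, False)] = reduce (f k)"
  by (simp add: subst_def)

lemma Cons_in_free_group:
  assumes "l # w \<in> carrier (F n)"
  shows "[l] \<in> carrier (F n)" "w \<in> carrier (F n)" "l # w = [l] \<otimes>\<^bsub>F n\<^esub> w"
proof -
  have cf: "cancellation_free (l # w)"
    using assms by (simp add: carrier_free_group reduced_iff_cancellation_free)
  show "[l] \<in> carrier (F n)" "w \<in> carrier (F n)"
    using assms cancellation_free_tl[OF cf]
    by (auto simp: carrier_free_group reduced_iff_cancellation_free reduced_def)
  show "l # w = [l] \<otimes>\<^bsub>F n\<^esub> w"
    using reduce_cancellation_free[OF cf] by simp
qed

lemma hom_free_group_eqI:
  assumes h1: "h1 \<in> hom (F n) (F n)" and h2: "h2 \<in> hom (F n) (F n)"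
    and eq: "\<And>k. k \<in> {1..n} \<Longrightarrow> h1 [(k, False)] = h2 [(k, False)]"
    and w: "w \<in> carrier (F n)"
  shows "h1 w = h2 w"
proof -
  interpret h1: group_hom "F n" "F n" h1
    using h1 by (simp add: group_hom_def group_hom_axioms_def group_free_group)
  interpret h2: group_hom "F n" "F n" h2
    using h2 by (simp add: group_hom_def group_hom_axioms_def group_free_group)
  have letter: "h1 [l] = h2 [l]" if "[l] \<in> carrier (F n)" for l
  proof -
    obtain k b where l: "l = (k, b)"
      by (cases l)
    then have k: "k \<in> {1..n}"
      using that by (simp add: carrier_free_group)
    have "[(k, True)] = inv\<^bsub>F n\<^esub> [(k, False)]"
      using k by (simp add: inv_free_group letter_in_free_group inv_word_def)
    then show ?thesis
      using k eq letter_in_free_group[OF k] l by (cases b) simp_all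
  qed
  from w show ?thesis
  proof (induction w)
    case Nil
    show ?case using h1.hom_one h2.hom_one by simp
  next
    case (Cons l w)
    note lw = Cons_in_free_group[OF Cons.prems]
    have "h1 (l # w) = h1 [l] \<otimes>\<^bsub>F n\<^esub> h1 w" "h2 (l # w) = h2 [l] \<otimes>\<^bsub>F n\<^esub> h2 w"
      by (subst lw(3), rule h1.hom_mult[OF lw(1,2)]) (subst lw(3), rule h2.hom_mult[OF lw(1,2)])
    then show ?case
      using Cons.IH lw(1,2) letter by simp
  qed
qed

section \<open>The automorphisms \<open>\<xi>\<^sub>i\<^sub>j\<close> and the group \<open>P\<Sigma>\<^sub>n\<close>\<close>

definition index_pair :: "nat \<Rightarrow> nat \<Rightarrow> nat \<Rightarrow> bool" where
  "index_pair n i j \<longleftrightarrow> i \<in> {1..n} \<and> j \<in> {1..n} \<and> i \<noteq> j"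

definition xi_image :: "nat \<Rightarrow> nat \<Rightarrow> nat \<Rightarrow> word" where
  "xi_image i j k = (if k = i then [(j, True), (i, False), (j, False)] else [(k, False)])"

definition xi_inv_image :: "nat \<Rightarrow> nat \<Rightarrow> nat \<Rightarrow> word" where
  "xi_inv_image i j k = (if k = i then [(j, False), (i, False), (j, True)] else [(k, False)])"

definition xi_inv :: "nat \<Rightarrow> nat \<Rightarrow> nat \<Rightarrow> word \<Rightarrow> word" where
  "xi_inv n i j = (\<lambda>w \<in> carrier (F n). subst (xi_inv_image i j) w)"

lemma xi_eq_subst: "xi n i j = (\<lambda>w \<in> carrier (F n). subst (xi_image i j) w)"
  by (simp add: xi_def xi_image_def[abs_def])

lemma xi_image_in_free_group: "index_pair n i j \<Longrightarrow> k \<in> {1..n} \<Longrightarrow> xi_image i j k \<in> carrier (F n)"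
  by (auto simp: index_pair_def xi_image_def carrier_free_group reduced_def)

lemma xi_inv_image_in_free_group:
  "index_pair n i j \<Longrightarrow> k \<in> {1..n} \<Longrightarrow> xi_inv_image i j k \<in> carrier (F n)"
  by (auto simp: index_pair_def xi_inv_image_def carrier_free_group reduced_def)

lemma xi_hom: "index_pair n i j \<Longrightarrow> xi n i j \<in> hom (F n) (F n)"
  unfolding xi_eq_subst by (intro restrict_hom_free_group subst_hom xi_image_in_free_group)

lemma xi_inv_hom: "index_pair n i j \<Longrightarrow> xi_inv n i j \<in> hom (F n) (F n)"
  unfolding xi_inv_def by (intro restrict_hom_free_group subst_hom xi_inv_image_in_free_group)

lemma xi_letter:
  "index_pair n i j \<Longrightarrow> k \<in> {1..n} \<Longrightarrow> xi n i j [(k, False)] = xi_image i j k"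
  by (auto simp: xi_eq_subst letter_in_free_group subst_single xi_image_def index_pair_def)

lemma xi_inv_letter:
  "index_pair n i j \<Longrightarrow> k \<in> {1..n} \<Longrightarrow> xi_inv n i j [(k, False)] = xi_inv_image i j k"
  by (auto simp: xi_inv_def letter_in_free_group subst_single xi_inv_image_def index_pair_def)

lemma xi_apply:
  "w \<in> carrier (F n) \<Longrightarrow> xi n i j w = reduce (concat (map (letter_image (xi_image i j)) w))"
  by (simp add: xi_eq_subst subst_letter_image)

lemma xi_inv_apply:
  "w \<in> carrier (F n) \<Longrightarrow> xi_inv n i j w = reduce (concat (map (letter_image (xi_inv_image i j)) w))"
  by (simp add: xi_inv_def subst_letter_image)

lemma xi_xi_inv_letter:
  assumes ij: "index_pair n i j" and k: "k \<in> {1..n}"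
  shows "xi n i j (xi_inv n i j [(k, False)]) = [(k, False)]"
    and "xi_inv n i j (xi n i j [(k, False)]) = [(k, False)]"
proof -
  have c: "[(j, b1), (i, False), (j, b2)] \<in> carrier (F n)" for b1 b2
    using ij by (auto simp: index_pair_def carrier_free_group reduced_def)
  have "i \<noteq> j" using ij by (simp add: index_pair_def)
  then have "xi n i j [(j, False), (i, False), (j, True)] = [(i, False)]"
    "xi_inv n i j [(j, True), (i, False), (j, False)] = [(i, False)]"
    using c by (simp_all add: xi_apply xi_inv_apply letter_image_def xi_image_def
        xi_inv_image_def inv_word_def)
  moreover have "xi n i j [(k, False)] = [(k, False)]" "xi_inv n i j [(k, False)] = [(k, False)]"
    if "k \<noteq> i"
    using that ij k by (simp_all add: xi_letter xi_inv_letter xi_image_def xi_inv_image_def)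
  ultimately show "xi n i j (xi_inv n i j [(k, False)]) = [(k, False)]"
    "xi_inv n i j (xi n i j [(k, False)]) = [(k, False)]"
    using ij k by (cases "k = i"; simp add: xi_letter xi_inv_letter xi_image_def xi_inv_image_def)+
qed

lemma xi_xi_inv:
  assumes ij: "index_pair n i j" and w: "w \<in> carrier (F n)"
  shows "xi n i j (xi_inv n i j w) = w" and "xi_inv n i j (xi n i j w) = w"
proof -
  have id: "(\<lambda>x. x) \<in> hom (F n) (F n)"
    by (rule homI) auto
  have "(xi n i j \<circ> xi_inv n i j) w = w"
    by (rule hom_free_group_eqI[OF hom_compose[OF xi_inv_hom[OF ij] xi_hom[OF ij]] id _ w])
      (simp add: xi_xi_inv_letter[OF ij])
  then show "xi n i j (xi_inv n i j w) = w" by simp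
  have "(xi_inv n i j \<circ> xi n i j) w = w"
    by (rule hom_free_group_eqI[OF hom_compose[OF xi_hom[OF ij] xi_inv_hom[OF ij]] id _ w])
      (simp add: xi_xi_inv_letter[OF ij])
  then show "xi_inv n i j (xi n i j w) = w" by simp
qed

lemma xi_auto: assumes "index_pair n i j" shows "xi n i j \<in> auto (F n)"
proof -
  have "bij_betw (xi n i j) (carrier (F n)) (carrier (F n))"
    using xi_xi_inv[OF assms] hom_carrier[OF xi_hom[OF assms]] hom_carrier[OF xi_inv_hom[OF assms]]
    by (intro bij_betw_byWitness[where f' = "xi_inv n i j"]) auto
  then show ?thesis
    using xi_hom[OF assms] by (simp add: auto_def Bij_def xi_def)
qed

abbreviation AG :: "nat \<Rightarrow> (word \<Rightarrow> word) monoid" where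
  "AG n \<equiv> AutoGroup (F n)"

abbreviation PS :: "nat \<Rightarrow> (word \<Rightarrow> word) monoid" where
  "PS n \<equiv> PSigma n"

definition xi_gens :: "nat \<Rightarrow> (word \<Rightarrow> word) set" where
  "xi_gens n = {xi n i j | i j. index_pair n i j}"

lemma PSigma_eq: "PS n = (AG n)\<lparr>carrier := generate (AG n) (xi_gens n)\<rparr>"
  by (simp add: PSigma_def xi_gens_def index_pair_def)

lemma group_AG: "group (AG n)"
  using group.AutoGroup[OF group_free_group] .

lemma subgroup_PSigma: "subgroup (generate (AG n) (xi_gens n)) (AG n)"
  using xi_auto by (intro group.generate_is_subgroup[OF group_AG])
    (auto simp: xi_gens_def AutoGroup_def)

lemma group_PSigma: "group (PS n)"
  unfolding PSigma_eq using subgroup.subgroup_is_group[OF subgroup_PSigma group_AG] .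

lemma carrier_PSigma: "carrier (PS n) = generate (AG n) (xi_gens n)"
  by (simp add: PSigma_eq)

lemma PSigma_auto: "\<phi> \<in> carrier (PS n) \<Longrightarrow> \<phi> \<in> auto (F n)"
  using subgroup.subset[OF subgroup_PSigma] carrier_PSigma by (fastforce simp: AutoGroup_def)

lemma PSigma_hom: "\<phi> \<in> carrier (PS n) \<Longrightarrow> \<phi> \<in> hom (F n) (F n)"
  using PSigma_auto by (simp add: auto_def)

lemma PSigma_apply_closed: "\<phi> \<in> carrier (PS n) \<Longrightarrow> w \<in> carrier (F n) \<Longrightarrow> \<phi> w \<in> carrier (F n)"
  by (rule hom_in_carrier[OF PSigma_hom])

lemma mult_PSigma_apply:
  "\<phi> \<in> carrier (PS n) \<Longrightarrow> \<psi> \<in> carrier (PS n) \<Longrightarrow> w \<in> carrier (F n) \<Longrightarrow>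
    (\<phi> \<otimes>\<^bsub>PS n\<^esub> \<psi>) w = \<phi> (\<psi> w)"
  using PSigma_auto[of \<phi> n] PSigma_auto[of \<psi> n]
  by (simp add: PSigma_eq AutoGroup_def BijGroup_def auto_def compose_def)

lemma one_PSigma_apply: "w \<in> carrier (F n) \<Longrightarrow> \<one>\<^bsub>PS n\<^esub> w = w"
  by (simp add: PSigma_eq AutoGroup_def BijGroup_def)

lemma inv_PSigma_apply:
  assumes "\<phi> \<in> carrier (PS n)" "w \<in> carrier (F n)"
  shows "\<phi> ((inv\<^bsub>PS n\<^esub> \<phi>) w) = w"
  using group.r_inv[OF group_PSigma assms(1)] assms group.inv_closed[OF group_PSigma]
  by (metis mult_PSigma_apply one_PSigma_apply)

lemma xi_in_PSigma: "index_pair n i j \<Longrightarrow> xi n i j \<in> carrier (PS n)"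
  unfolding carrier_PSigma by (rule generate.incl) (auto simp: xi_gens_def)

lemma PSigma_eqI:
  assumes "\<phi> \<in> carrier (PS n)" "\<psi> \<in> carrier (PS n)"
    and "\<And>k. k \<in> {1..n} \<Longrightarrow> \<phi> [(k, False)] = \<psi> [(k, False)]"
  shows "\<phi> = \<psi>"
  using PSigma_auto[OF assms(1)] PSigma_auto[OF assms(2)]
    hom_free_group_eqI[OF PSigma_hom[OF assms(1)] PSigma_hom[OF assms(2)] assms(3)]
  by (intro extensionalityI[where A = "carrier (F n)"]) (auto simp: auto_def Bij_def)

lemma mult_AG_PSigma: "x \<otimes>\<^bsub>AG n\<^esub> y = x \<otimes>\<^bsub>PS n\<^esub> y"
  by (simp add: PSigma_eq)

lemma one_AG_PSigma: "\<one>\<^bsub>AG n\<^esub> = \<one>\<^bsub>PS n\<^esub>"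
  by (simp add: PSigma_eq)

lemma inv_AG_PSigma: "\<phi> \<in> carrier (PS n) \<Longrightarrow> inv\<^bsub>AG n\<^esub> \<phi> = inv\<^bsub>PS n\<^esub> \<phi>"
  unfolding PSigma_eq using group.m_inv_consistent[OF group_AG subgroup_PSigma]
  by (simp add: carrier_PSigma)

lemma generate_PSigma: "generate (PS n) (xi_gens n) = carrier (PS n)"
proof -
  have "generate (PS n) (xi_gens n) = generate (AG n) (xi_gens n)"
    unfolding PSigma_eq
    by (rule group.generate_consistent[OF group_AG _ subgroup_PSigma]) (auto intro: generate.incl)
  then show ?thesis by (simp only: carrier_PSigma)
qed

section \<open>Second-order jets\<close>

text \<open>The jet \<open>Jet c l q\<close> stands for \<open>c + \<Sum>\<^sub>u l u t\<^sub>u + \<Sum>\<^sub>u\<^sub>v q u v t\<^sub>u t\<^sub>v / 2\<close> in commuting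
  variables \<open>t\<^sub>1, t\<^sub>2, \<dots>\<close> modulo terms of degree 3: \<open>q\<close> is the Hessian at \<open>t = 0\<close>.\<close>

datatype jet = Jet (jet0: int) (jet1: "nat \<Rightarrow> int") (jet2: "nat \<Rightarrow> nat \<Rightarrow> int")

lemma jet_eqI: "jet0 a = jet0 b \<Longrightarrow> jet1 a = jet1 b \<Longrightarrow> jet2 a = jet2 b \<Longrightarrow> a = b"
  by (cases a; cases b) auto

instantiation jet :: comm_ring_1
begin

definition "0 = Jet 0 (\<lambda>u. 0) (\<lambda>u v. 0)"
definition "1 = Jet 1 (\<lambda>u. 0) (\<lambda>u v. 0)"
definition "a + b = Jet (jet0 a + jet0 b) (\<lambda>u. jet1 a u + jet1 b u) (\<lambda>u v. jet2 a u v + jet2 b u v)"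
definition "a - b = Jet (jet0 a - jet0 b) (\<lambda>u. jet1 a u - jet1 b u) (\<lambda>u v. jet2 a u v - jet2 b u v)"
definition "- a = Jet (- jet0 a) (\<lambda>u. - jet1 a u) (\<lambda>u v. - jet2 a u v)"
definition "a * b = Jet (jet0 a * jet0 b) (\<lambda>u. jet0 a * jet1 b u + jet0 b * jet1 a u)
   (\<lambda>u v. jet0 a * jet2 b u v + jet0 b * jet2 a u v + jet1 a u * jet1 b v + jet1 b u * jet1 a v)"

instance
  by standard (auto intro!: jet_eqI simp: zero_jet_def one_jet_def plus_jet_def minus_jet_def
      uminus_jet_def times_jet_def algebra_simps)

end

lemma jet0_simps [simp]:
  "jet0 0 = 0" "jet0 1 = 1" "jet0 (a + b) = jet0 a + jet0 b" "jet0 (a - b) = jet0 a - jet0 b"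
  "jet0 (- a) = - jet0 a" "jet0 (a * b) = jet0 a * jet0 b"
  by (simp_all add: zero_jet_def one_jet_def plus_jet_def minus_jet_def uminus_jet_def times_jet_def)

lemma jet1_simps [simp]:
  "jet1 0 u = 0" "jet1 1 u = 0" "jet1 (a + b) u = jet1 a u + jet1 b u"
  "jet1 (a - b) u = jet1 a u - jet1 b u" "jet1 (- a) u = - jet1 a u"
  "jet1 (a * b) u = jet0 a * jet1 b u + jet0 b * jet1 a u"
  by (simp_all add: zero_jet_def one_jet_def plus_jet_def minus_jet_def uminus_jet_def times_jet_def)

lemma jet2_simps [simp]:
  "jet2 0 u v = 0" "jet2 1 u v = 0" "jet2 (a + b) u v = jet2 a u v + jet2 b u v"
  "jet2 (a - b) u v = jet2 a u v - jet2 b u v" "jet2 (- a) u v = - jet2 a u v"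
  "jet2 (a * b) u v = jet0 a * jet2 b u v + jet0 b * jet2 a u v + jet1 a u * jet1 b v + jet1 b u * jet1 a v"
  by (simp_all add: zero_jet_def one_jet_def plus_jet_def minus_jet_def uminus_jet_def times_jet_def)

lemma jet_sum:
  "jet0 (sum f A) = (\<Sum>x\<in>A. jet0 (f x))"
  "jet1 (sum f A) u = (\<Sum>x\<in>A. jet1 (f x) u)"
  "jet2 (sum f A) u v = (\<Sum>x\<in>A. jet2 (f x) u v)"
  by (induction A rule: infinite_finite_induct) auto

section \<open>Fox derivatives with values in jets\<close>

text \<open>Abelianise \<open>F\<^sub>n\<close> by \<open>x\<^sub>k \<mapsto> 1 + t\<^sub>k\<close>; then \<open>x\<^sub>k\<^sup>-\<^sup>1 \<mapsto> 1 - t\<^sub>k + t\<^sub>k\<^sup>2\<close>.  The Fox derivative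
  \<open>fox w r\<close> of \<open>w\<close> with respect to \<open>x\<^sub>r\<close> is determined by \<open>\<partial>(l w) = \<partial>l + l \<partial>w\<close>,
  \<open>\<partial>x\<^sub>k/\<partial>x\<^sub>r = \<delta>\<^sub>k\<^sub>r\<close> and \<open>\<partial>x\<^sub>k\<^sup>-\<^sup>1/\<partial>x\<^sub>r = -x\<^sub>k\<^sup>-\<^sup>1 \<delta>\<^sub>k\<^sub>r\<close>.\<close>

definition jet_letter :: "nat \<times> bool \<Rightarrow> jet" where
  "jet_letter l = (if snd l
     then Jet 1 (\<lambda>u. - of_bool (u = fst l)) (\<lambda>u v. if u = fst l \<and> v = fst l then 2 else 0)
     else Jet 1 (\<lambda>u. of_bool (u = fst l)) (\<lambda>u v. 0))"

definition fox_letter :: "nat \<times> bool \<Rightarrow> nat \<Rightarrow> jet" where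
  "fox_letter l r = (if r = fst l then (if snd l then - jet_letter l else 1) else 0)"

fun jet_word :: "word \<Rightarrow> jet" where
  "jet_word [] = 1"
| "jet_word (l # w) = jet_letter l * jet_word w"

fun fox :: "word \<Rightarrow> nat \<Rightarrow> jet" where
  "fox [] r = 0"
| "fox (l # w) r = fox_letter l r + jet_letter l * fox w r"

lemma jet_letter_inv_letter: "jet_letter l * jet_letter (inv_letter l) = 1"
  by (rule jet_eqI) (auto simp: jet_letter_def inv_letter_def fun_eq_iff)

lemma fox_letter_inv_letter: "fox_letter l r + jet_letter l * fox_letter (inv_letter l) r = 0"
  using jet_letter_inv_letter[of l] by (cases "snd l") (simp_all add: fox_letter_def inv_letter_def)

lemma jet_word_append: "jet_word (u @ v) = jet_word u * jet_word v"
  by (induction u) (auto simp: algebra_simps)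

lemma fox_append: "fox (u @ v) r = fox u r + jet_word u * fox v r"
  by (induction u) (auto simp: algebra_simps)

lemma jet_word_reduce: "jet_word (reduce w) = jet_word w"
  by (rule reduce_invariant) (simp_all add: jet_letter_inv_letter mult.assoc[symmetric])

lemma fox_reduce: "fox (reduce w) r = fox w r"
proof (rule reduce_invariant)
  fix x w
  have "fox (x # inv_letter x # w) r =
      (fox_letter x r + jet_letter x * fox_letter (inv_letter x) r)
      + (jet_letter x * jet_letter (inv_letter x)) * fox w r"
    by (simp add: algebra_simps)
  then show "fox (x # inv_letter x # w) r = fox w r"
    by (simp only: fox_letter_inv_letter jet_letter_inv_letter) simp
qed simp

lemma jet_word_inv_word: "jet_word (inv_word w) * jet_word w = 1"
  using jet_word_reduce[of "inv_word w @ w"] by (simp add: reduce_inv_word_self jet_word_append)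

lemma fox_inv_word: "fox (inv_word w) r = - (jet_word (inv_word w) * fox w r)"
  using fox_reduce[of "inv_word w @ w" r]
  by (simp add: reduce_inv_word_self fox_append eq_neg_iff_add_eq_0)

lemma jet0_jet_word [simp]: "jet0 (jet_word w) = 1"
  by (induction w) (simp_all add: jet_letter_def)

text \<open>The augmentation of a Fox derivative is an exponent sum.\<close>

lemma jet0_fox: "jet0 (fox w r) = jet1 (jet_word w) r"
  by (induction w) (auto simp: fox_letter_def jet_letter_def)

lemma inverse_unique_jet: "(a :: jet) * x = 1 \<Longrightarrow> b * x = 1 \<Longrightarrow> a = b"
  by (metis mult.assoc mult.commute mult_1_right)

context
  fixes n :: nat and f :: "nat \<Rightarrow> word"
  assumes jet_word_f: "\<And>k. k \<in> {1..n} \<Longrightarrow> jet_word (f k) = jet_letter (k, False)"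
begin

lemma jet_word_letter_image:
  assumes "fst l \<in> {1..n}"
  shows "jet_word (letter_image f l) = jet_letter l"
proof (cases l)
  case (Pair k b)
  have "jet_word (inv_word (f k)) * jet_letter (k, False) = 1"
    using jet_word_inv_word[of "f k"] jet_word_f assms Pair by simp
  moreover have "jet_letter (k, True) * jet_letter (k, False) = 1"
    using jet_letter_inv_letter[of "(k, True)"] by simp
  ultimately show ?thesis
    using jet_word_f assms Pair inverse_unique_jet by (cases b) (auto simp: letter_image_def)
qed

lemma fox_letter_image:
  assumes "fst l \<in> {1..n}"
  shows "fox (letter_image f l) r = (\<Sum>k\<in>{1..n}. fox_letter l k * fox (f k) r)"
proof -
  have "(\<Sum>k\<in>{1..n}. fox_letter l k * fox (f k) r) =
      (if snd l then - jet_letter l else 1) * fox (f (fst l)) r"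
    using assms by (simp add: fox_letter_def if_distrib[of "\<lambda>x. x * _"] cong: if_cong)
  also have "\<dots> = fox (letter_image f l) r"
    using jet_word_letter_image[OF assms] assms
    by (cases l) (auto simp: letter_image_def fox_inv_word)
  finally show ?thesis ..
qed

lemma jet_word_subst: "fst ` set w \<subseteq> {1..n} \<Longrightarrow> jet_word (subst f w) = jet_word w"
  by (induction w) (simp_all add: subst_letter_image jet_word_reduce jet_word_append
      jet_word_letter_image)

lemma fox_subst:
  "fst ` set w \<subseteq> {1..n} \<Longrightarrow> fox (subst f w) r = (\<Sum>k\<in>{1..n}. fox w k * fox (f k) r)"
proof (induction w)
  case (Cons l w)
  then have "fox (concat (map (letter_image f) (l # w))) r =
      (\<Sum>k\<in>{1..n}. fox_letter l k * fox (f k) r)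
      + jet_letter l * (\<Sum>k\<in>{1..n}. fox w k * fox (f k) r)"
    by (simp add: fox_append fox_letter_image jet_word_letter_image subst_letter_image fox_reduce)
  then show ?case
    by (simp add: subst_letter_image fox_reduce sum.distrib sum_distrib_left algebra_simps)
qed (simp add: subst_def)

end

section \<open>The Fox Jacobian of an element of \<open>P\<Sigma>\<^sub>n\<close>\<close>

lemma PSigma_eq_subst:
  assumes \<phi>: "\<phi> \<in> carrier (PS n)" and w: "w \<in> carrier (F n)"
  shows "\<phi> w = subst (\<lambda>k. \<phi> [(k, False)]) w"
proof -
  have images: "\<And>k. k \<in> {1..n} \<Longrightarrow> \<phi> [(k, False)] \<in> carrier (F n)"
    using PSigma_apply_closed[OF \<phi>] letter_in_free_group by blast
  show ?thesis
  proof (rule hom_free_group_eqI[OF PSigma_hom[OF \<phi>] subst_hom[OF images] _ w])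
    fix k assume "k \<in> {1..n}"
    then show "\<phi> [(k, False)] = subst (\<lambda>k. \<phi> [(k, False)]) [(k, False)]"
      using images by (simp add: subst_single carrier_free_group reduced_def)
  qed
qed

lemma jet_word_xi_apply:
  assumes ij: "index_pair n i j" and w: "w \<in> carrier (F n)"
  shows "jet_word (xi n i j w) = jet_word w"
proof -
  have "jet_word (xi_image i j k) = jet_letter (k, False)" for k
    using jet_letter_inv_letter[of "(j, True)"] by (simp add: xi_image_def algebra_simps)
  then have "jet_word (subst (xi_image i j) w) = jet_word w"
    using w by (intro jet_word_subst) (auto simp: carrier_free_group)
  then show ?thesis
    using w by (simp add: xi_eq_subst)
qed

lemma jet_word_PSigma_apply:
  assumes "\<phi> \<in> carrier (PS n)" and "w \<in> carrier (F n)"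
  shows "jet_word (\<phi> w) = jet_word w"
proof -
  have "\<phi> \<in> generate (AG n) (xi_gens n)"
    using assms(1) carrier_PSigma by blast
  then show ?thesis
    using assms(2)
  proof (induction arbitrary: w)
    case one
    then show ?case by (simp add: one_AG_PSigma one_PSigma_apply)
  next
    case (incl h)
    then show ?case by (auto simp: xi_gens_def jet_word_xi_apply)
  next
    case (inv h)
    then obtain i j where ij: "index_pair n i j" and h: "h = xi n i j"
      by (auto simp: xi_gens_def)
    have "h \<in> carrier (PS n)" using xi_in_PSigma ij h by simp
    then show ?case
      using jet_word_xi_apply[OF ij] inv_PSigma_apply PSigma_apply_closed group.inv_closed[OF group_PSigma]
        inv.prems by (metis h inv_AG_PSigma)
  next
    case (eng \<phi> \<psi>)
    then show ?case
      by (simp add: mult_AG_PSigma mult_PSigma_apply carrier_PSigma PSigma_apply_closed)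
  qed
qed

definition fox_matrix :: "(word \<Rightarrow> word) \<Rightarrow> nat \<Rightarrow> nat \<Rightarrow> jet" where
  "fox_matrix \<phi> i j = fox (\<phi> [(i, False)]) j"

lemma fox_matrix_mult:
  assumes "\<phi> \<in> carrier (PS n)" "\<psi> \<in> carrier (PS n)" "i \<in> {1..n}"
  shows "fox_matrix (\<phi> \<otimes>\<^bsub>PS n\<^esub> \<psi>) i j = (\<Sum>k\<in>{1..n}. fox_matrix \<psi> i k * fox_matrix \<phi> k j)"
proof -
  have \<psi>i: "\<psi> [(i, False)] \<in> carrier (F n)"
    using PSigma_apply_closed[OF assms(2) letter_in_free_group[OF assms(3)]] .
  have "jet_word (\<phi> [(k, False)]) = jet_letter (k, False)" if "k \<in> {1..n}" for k
    using jet_word_PSigma_apply[OF assms(1) letter_in_free_group[OF that]] by simp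
  then have "fox (subst (\<lambda>k. \<phi> [(k, False)]) (\<psi> [(i, False)])) j =
      (\<Sum>k\<in>{1..n}. fox_matrix \<psi> i k * fox_matrix \<phi> k j)"
    using \<psi>i unfolding fox_matrix_def by (intro fox_subst) (auto simp: carrier_free_group)
  then have "fox (\<phi> (\<psi> [(i, False)])) j = (\<Sum>k\<in>{1..n}. fox_matrix \<psi> i k * fox_matrix \<phi> k j)"
    using \<psi>i by (simp add: PSigma_eq_subst[OF assms(1)])
  then show ?thesis
    using assms letter_in_free_group by (simp add: fox_matrix_def mult_PSigma_apply)
qed

lemma fox_matrix_one: "i \<in> {1..n} \<Longrightarrow> fox_matrix \<one>\<^bsub>PS n\<^esub> i j = of_bool (i = j)"
  by (simp add: fox_matrix_def one_PSigma_apply letter_in_free_group fox_letter_def)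

lemma jet0_fox_matrix:
  "\<phi> \<in> carrier (PS n) \<Longrightarrow> i \<in> {1..n} \<Longrightarrow> jet0 (fox_matrix \<phi> i j) = of_bool (i = j)"
  by (simp add: fox_matrix_def jet0_fox jet_word_PSigma_apply letter_in_free_group jet_letter_def)

lemma sum_of_bool_left:
  "i \<in> {1..n :: nat} \<Longrightarrow> (\<Sum>k\<in>{1..n}. of_bool (i = k) * f k) = (f i :: int)"
  by (simp add: of_bool_def if_distrib[of "\<lambda>x. x * _"] cong: if_cong)

lemma sum_of_bool_right:
  "j \<in> {1..n :: nat} \<Longrightarrow> (\<Sum>k\<in>{1..n}. f k * of_bool (k = j)) = (f j :: int)"
  by (simp add: of_bool_def if_distrib[of "\<lambda>x. _ * x"] cong: if_cong)

section \<open>Linear and quadratic parts of the Fox Jacobian\<close>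

text \<open>Outside \<open>{1..n}\<close> the entries are set to \<open>0\<close>, so that vanishing of these parts is an equation
  between functions.\<close>

definition fox_lin :: "nat \<Rightarrow> (word \<Rightarrow> word) \<Rightarrow> nat \<Rightarrow> nat \<Rightarrow> nat \<Rightarrow> int" where
  "fox_lin n \<phi> i j u = (if i \<in> {1..n} \<and> j \<in> {1..n} then jet1 (fox_matrix \<phi> i j) u else 0)"

definition fox_quad :: "nat \<Rightarrow> (word \<Rightarrow> word) \<Rightarrow> nat \<Rightarrow> nat \<Rightarrow> nat \<Rightarrow> nat \<Rightarrow> int" where
  "fox_quad n \<phi> i j u v = (if i \<in> {1..n} \<and> j \<in> {1..n} then jet2 (fox_matrix \<phi> i j) u v else 0)"

definition lin_prod ::
  "nat \<Rightarrow> (nat \<Rightarrow> nat \<Rightarrow> nat \<Rightarrow> int) \<Rightarrow> (nat \<Rightarrow> nat \<Rightarrow> nat \<Rightarrow> int) \<Rightarrow> nat \<Rightarrow> nat \<Rightarrow> nat \<Rightarrow> nat \<Rightarrow> int"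
  where "lin_prod n A B i j u v = (\<Sum>k\<in>{1..n}. A i k u * B k j v + A i k v * B k j u)"

lemma lin_prod_neg_left: "lin_prod n (\<lambda>i j u. - A i j u) B i j u v = - lin_prod n A B i j u v"
  unfolding lin_prod_def by (subst sum_negf[symmetric]) (rule sum.cong, simp_all add: algebra_simps)

lemma lin_prod_neg_right: "lin_prod n A (\<lambda>i j u. - B i j u) i j u v = - lin_prod n A B i j u v"
  unfolding lin_prod_def by (subst sum_negf[symmetric]) (rule sum.cong, simp_all add: algebra_simps)

lemma lin_prod_zero [simp]: "lin_prod n (\<lambda>i j u. 0) B i j u v = 0" "lin_prod n A (\<lambda>i j u. 0) i j u v = 0"
  by (simp_all add: lin_prod_def)

text \<open>The constant part of the Fox Jacobian is the identity matrix, so the product rule for jets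
  makes the linear part additive and the quadratic part additive up to \<open>lin_prod\<close>.\<close>

lemma fox_lin_mult:
  assumes "\<phi> \<in> carrier (PS n)" "\<psi> \<in> carrier (PS n)"
  shows "fox_lin n (\<phi> \<otimes>\<^bsub>PS n\<^esub> \<psi>) = (\<lambda>i j u. fox_lin n \<psi> i j u + fox_lin n \<phi> i j u)"
proof (intro ext)
  fix i j u
  show "fox_lin n (\<phi> \<otimes>\<^bsub>PS n\<^esub> \<psi>) i j u = fox_lin n \<psi> i j u + fox_lin n \<phi> i j u"
  proof (cases "i \<in> {1..n} \<and> j \<in> {1..n}")
    case True
    then have "jet1 (fox_matrix (\<phi> \<otimes>\<^bsub>PS n\<^esub> \<psi>) i j) u =
        (\<Sum>k\<in>{1..n}. of_bool (i = k) * jet1 (fox_matrix \<phi> k j) u + jet1 (fox_matrix \<psi> i k) u * of_bool (k = j))"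
      using assms jet0_fox_matrix by (auto simp: fox_matrix_mult jet_sum intro!: sum.cong)
    then show ?thesis
      using True by (simp add: fox_lin_def sum.distrib sum_of_bool_left sum_of_bool_right)
  qed (auto simp: fox_lin_def)
qed

lemma fox_quad_mult:
  assumes "\<phi> \<in> carrier (PS n)" "\<psi> \<in> carrier (PS n)"
  shows "fox_quad n (\<phi> \<otimes>\<^bsub>PS n\<^esub> \<psi>) i j u v =
    fox_quad n \<psi> i j u v + fox_quad n \<phi> i j u v + lin_prod n (fox_lin n \<psi>) (fox_lin n \<phi>) i j u v"
proof (cases "i \<in> {1..n} \<and> j \<in> {1..n}")
  case True
  then have "jet2 (fox_matrix (\<phi> \<otimes>\<^bsub>PS n\<^esub> \<psi>) i j) u v =
      (\<Sum>k\<in>{1..n}. of_bool (i = k) * jet2 (fox_matrix \<phi> k j) u v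
        + jet2 (fox_matrix \<psi> i k) u v * of_bool (k = j)
        + (fox_lin n \<psi> i k u * fox_lin n \<phi> k j v + fox_lin n \<psi> i k v * fox_lin n \<phi> k j u))"
    using assms jet0_fox_matrix by (auto simp: fox_matrix_mult jet_sum fox_lin_def intro!: sum.cong)
  then show ?thesis
    using True by (simp add: fox_quad_def lin_prod_def sum.distrib sum_of_bool_left sum_of_bool_right)
qed (auto simp: fox_quad_def fox_lin_def lin_prod_def)

lemma fox_lin_one: "fox_lin n \<one>\<^bsub>PS n\<^esub> = (\<lambda>i j u. 0)"
  by (simp add: fun_eq_iff fox_lin_def fox_matrix_one)

lemma fox_quad_one: "fox_quad n \<one>\<^bsub>PS n\<^esub> = (\<lambda>i j u v. 0)"
  by (simp add: fun_eq_iff fox_quad_def fox_matrix_one)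

lemma fox_lin_inv:
  assumes "\<phi> \<in> carrier (PS n)"
  shows "fox_lin n (inv\<^bsub>PS n\<^esub> \<phi>) = (\<lambda>i j u. - fox_lin n \<phi> i j u)"
  using fox_lin_mult[OF assms group.inv_closed[OF group_PSigma assms]]
    group.r_inv[OF group_PSigma assms] fox_lin_one
  by (simp add: fun_eq_iff eq_neg_iff_add_eq_0)

lemma fox_quad_inv:
  assumes "\<phi> \<in> carrier (PS n)"
  shows "fox_quad n (inv\<^bsub>PS n\<^esub> \<phi>) i j u v =
    - fox_quad n \<phi> i j u v + lin_prod n (fox_lin n \<phi>) (fox_lin n \<phi>) i j u v"
  using fox_quad_mult[OF assms group.inv_closed[OF group_PSigma assms], of i j u v]
    group.r_inv[OF group_PSigma assms] fox_quad_one fox_lin_inv[OF assms]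
    lin_prod_neg_left[of n "fox_lin n \<phi>"]
  by simp

lemma fox_lin_comm:
  assumes "a \<in> carrier (PS n)" "b \<in> carrier (PS n)"
  shows "fox_lin n (comm (PS n) a b) = (\<lambda>i j u. 0)"
proof -
  interpret PS: group "PS n" by (rule group_PSigma)
  show ?thesis
    using assms by (simp add: PS.comm_eq_inv_mult fox_lin_mult fox_lin_inv)
qed

lemma fox_quad_comm:
  assumes a: "a \<in> carrier (PS n)" and b: "b \<in> carrier (PS n)"
  shows "fox_quad n (comm (PS n) a b) i j u v =
    lin_prod n (fox_lin n b) (fox_lin n a) i j u v - lin_prod n (fox_lin n a) (fox_lin n b) i j u v"
proof -
  interpret PS: group "PS n" by (rule group_PSigma)
  let ?A = "fox_lin n a" and ?B = "fox_lin n b" and ?S = "\<lambda>i j u. fox_lin n a i j u + fox_lin n b i j u"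
  have ab: "a \<otimes>\<^bsub>PS n\<^esub> b \<in> carrier (PS n)" and ba: "b \<otimes>\<^bsub>PS n\<^esub> a \<in> carrier (PS n)"
    using a b by auto
  have lin_ab: "fox_lin n (a \<otimes>\<^bsub>PS n\<^esub> b) = ?S" and lin_ba: "fox_lin n (b \<otimes>\<^bsub>PS n\<^esub> a) = ?S"
    using a b by (simp_all add: fox_lin_mult add.commute)
  have "fox_quad n (comm (PS n) a b) i j u v
      = fox_quad n (a \<otimes>\<^bsub>PS n\<^esub> b) i j u v + fox_quad n (inv\<^bsub>PS n\<^esub> (b \<otimes>\<^bsub>PS n\<^esub> a)) i j u v
        + lin_prod n ?S (\<lambda>i j u. - ?S i j u) i j u v"
    using PS.comm_eq_inv_mult[OF a b] fox_quad_mult[OF PS.inv_closed[OF ba] ab] lin_ab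
      fox_lin_inv[OF ba] lin_ba by simp
  also have "\<dots> = fox_quad n (a \<otimes>\<^bsub>PS n\<^esub> b) i j u v
      + fox_quad n (inv\<^bsub>PS n\<^esub> (b \<otimes>\<^bsub>PS n\<^esub> a)) i j u v - lin_prod n ?S ?S i j u v"
    by (simp only: lin_prod_neg_right diff_conv_add_uminus)
  also have "\<dots> = (fox_quad n b i j u v + fox_quad n a i j u v + lin_prod n ?B ?A i j u v)
      - (fox_quad n a i j u v + fox_quad n b i j u v + lin_prod n ?A ?B i j u v)"
    using fox_quad_mult[OF a b] fox_quad_mult[OF b a] fox_quad_inv[OF ba] lin_ba by simp
  finally show ?thesis by simp
qed

definition lin_trivial :: "nat \<Rightarrow> (word \<Rightarrow> word) set" where
  "lin_trivial n = {\<phi> \<in> carrier (PS n). fox_lin n \<phi> = (\<lambda>i j u. 0)}"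

definition quad_trivial :: "nat \<Rightarrow> (word \<Rightarrow> word) set" where
  "quad_trivial n = {\<phi> \<in> lin_trivial n. fox_quad n \<phi> = (\<lambda>i j u v. 0)}"

lemma subgroup_lin_trivial: "subgroup (lin_trivial n) (PS n)"
proof -
  interpret PS: group "PS n" by (rule group_PSigma)
  show ?thesis
    by (intro PS.subgroupI) (auto simp: lin_trivial_def fox_lin_inv fox_lin_mult fox_lin_one fun_eq_iff)
qed

lemma subgroup_quad_trivial: "subgroup (quad_trivial n) (PS n)"
proof -
  interpret PS: group "PS n" by (rule group_PSigma)
  have one: "\<one>\<^bsub>PS n\<^esub> \<in> quad_trivial n"
    by (auto simp: quad_trivial_def lin_trivial_def fox_lin_one fox_quad_one)
  show ?thesis
  proof (rule PS.subgroupI)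
    fix a assume "a \<in> quad_trivial n"
    then have a: "a \<in> carrier (PS n)" "fox_lin n a = (\<lambda>i j u. 0)" "fox_quad n a = (\<lambda>i j u v. 0)"
      by (auto simp: quad_trivial_def lin_trivial_def)
    have "fox_quad n (inv\<^bsub>PS n\<^esub> a) = (\<lambda>i j u v. 0)"
      by (intro ext) (simp add: fox_quad_inv a)
    then show "inv\<^bsub>PS n\<^esub> a \<in> quad_trivial n"
      using a by (simp add: quad_trivial_def lin_trivial_def fox_lin_inv)
  next
    fix a b assume "a \<in> quad_trivial n" "b \<in> quad_trivial n"
    then have a: "a \<in> carrier (PS n)" "fox_lin n a = (\<lambda>i j u. 0)" "fox_quad n a = (\<lambda>i j u v. 0)"
      and b: "b \<in> carrier (PS n)" "fox_lin n b = (\<lambda>i j u. 0)" "fox_quad n b = (\<lambda>i j u v. 0)"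
      by (auto simp: quad_trivial_def lin_trivial_def)
    have "fox_quad n (a \<otimes>\<^bsub>PS n\<^esub> b) = (\<lambda>i j u v. 0)"
      by (intro ext) (simp add: fox_quad_mult a b)
    then show "a \<otimes>\<^bsub>PS n\<^esub> b \<in> quad_trivial n"
      using a b by (simp add: quad_trivial_def lin_trivial_def fox_lin_mult)
  qed (use one in \<open>auto simp: quad_trivial_def lin_trivial_def\<close>)
qed

lemma lcs_2_subset_lin_trivial: "lcs (PS n) 2 \<subseteq> lin_trivial n"
  unfolding group.lcs_2[OF group_PSigma]
  by (rule group.generate_subgroup_incl[OF group_PSigma _ subgroup_lin_trivial])
    (auto simp: lin_trivial_def fox_lin_comm group.comm_closed[OF group_PSigma])

lemma lcs_3_subset_quad_trivial: "lcs (PS n) 3 \<subseteq> quad_trivial n"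
  unfolding group.lcs_3[OF group_PSigma]
proof (rule group.generate_subgroup_incl[OF group_PSigma _ subgroup_quad_trivial], safe)
  fix a b assume a: "a \<in> carrier (PS n)" and "b \<in> lcs (PS n) 2"
  then have b: "b \<in> carrier (PS n)" and "fox_lin n b = (\<lambda>i j u. 0)"
    using lcs_2_subset_lin_trivial by (auto simp: lin_trivial_def)
  moreover have "fox_quad n (comm (PS n) a b) = (\<lambda>i j u v. 0)"
    using a b by (intro ext) (simp add: fox_quad_comm \<open>fox_lin n b = (\<lambda>i j u. 0)\<close>)
  ultimately show "comm (PS n) a b \<in> quad_trivial n"
    using a by (simp add: quad_trivial_def lin_trivial_def fox_lin_comm group.comm_closed[OF group_PSigma])
qed

abbreviation Q :: "nat \<Rightarrow> (word \<Rightarrow> word) set monoid" where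
  "Q n \<equiv> gr2 (PS n)"

definition quad_coord :: "nat \<Rightarrow> (word \<Rightarrow> word) set \<Rightarrow> nat \<Rightarrow> nat \<Rightarrow> nat \<Rightarrow> nat \<Rightarrow> int" where
  "quad_coord n U = fox_quad n (SOME \<phi>. \<phi> \<in> U)"

lemma quad_coord_coset:
  assumes "\<phi> \<in> carrier (PS n)"
  shows "quad_coord n (lcs (PS n) 3 #>\<^bsub>PS n\<^esub> \<phi>) = fox_quad n \<phi>"
proof -
  interpret PS: group "PS n" by (rule group_PSigma)
  have "\<phi> \<in> lcs (PS n) 3 #>\<^bsub>PS n\<^esub> \<phi>"
    using assms PS.subgroup_lcs_3 by (simp add: PS.rcos_self)
  then have "(SOME \<psi>. \<psi> \<in> lcs (PS n) 3 #>\<^bsub>PS n\<^esub> \<phi>) \<in> lcs (PS n) 3 #>\<^bsub>PS n\<^esub> \<phi>"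
    by (rule someI[of "\<lambda>\<psi>. \<psi> \<in> lcs (PS n) 3 #>\<^bsub>PS n\<^esub> \<phi>"])
  then obtain h where h: "h \<in> quad_trivial n" "(SOME \<psi>. \<psi> \<in> lcs (PS n) 3 #>\<^bsub>PS n\<^esub> \<phi>) = h \<otimes>\<^bsub>PS n\<^esub> \<phi>"
    using lcs_3_subset_quad_trivial by (auto simp: r_coset_def)
  moreover have "fox_quad n (h \<otimes>\<^bsub>PS n\<^esub> \<phi>) = fox_quad n \<phi>"
    using h(1) assms by (intro ext) (simp add: fox_quad_mult quad_trivial_def lin_trivial_def)
  ultimately show ?thesis
    by (simp add: quad_coord_def)
qed

lemma quad_coord_mult:
  assumes "U \<in> carrier (Q n)" "V \<in> carrier (Q n)"
  shows "quad_coord n (U \<otimes>\<^bsub>Q n\<^esub> V) i j u v = quad_coord n U i j u v + quad_coord n V i j u v"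
proof -
  interpret PS: group "PS n" by (rule group_PSigma)
  obtain x y where xy: "x \<in> lcs (PS n) 2" "y \<in> lcs (PS n) 2"
    and U: "U = lcs (PS n) 3 #>\<^bsub>PS n\<^esub> x" and V: "V = lcs (PS n) 3 #>\<^bsub>PS n\<^esub> y"
    using assms by (auto simp: PS.carrier_gr2)
  have x: "x \<in> carrier (PS n)" and y: "y \<in> carrier (PS n)" and "fox_lin n y = (\<lambda>i j u. 0)"
    using xy PS.lcs_2_subset lcs_2_subset_lin_trivial by (auto simp: lin_trivial_def)
  then show ?thesis
    unfolding U V PS.gr2_coset_mult[OF xy, symmetric]
    by (simp add: quad_coord_coset fox_quad_mult)
qed

lemma quad_coord_comm_class:
  assumes "a \<in> carrier (PS n)" "b \<in> carrier (PS n)"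
  shows "quad_coord n (comm_class (PS n) a b) i j u v =
    lin_prod n (fox_lin n b) (fox_lin n a) i j u v - lin_prod n (fox_lin n a) (fox_lin n b) i j u v"
  using assms by (simp add: comm_class_def quad_coord_coset fox_quad_comm group.comm_closed[OF group_PSigma])

section \<open>Relations between the generators\<close>

lemma letter_image_xi_image:
  "letter_image (xi_image a b) (m, s) = (if m = a then [(b, True), (a, s), (b, False)] else [(m, s)])"
  by (simp add: letter_image_def xi_image_def inv_word_def)

lemma xi_apply_letter:
  "index_pair n a b \<Longrightarrow> m \<in> {1..n} \<Longrightarrow> xi n a b [(m, False)] = letter_image (xi_image a b) (m, False)"
  by (simp add: xi_letter letter_image_def)

lemmas xi_compute = xi_apply_letter xi_apply letter_image_xi_image carrier_free_group reduced_def

lemma xi_commute_disjoint: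
  assumes ab: "index_pair n a b" and cd: "index_pair n c d" and "c \<notin> {a, b}" "d \<notin> {a, b}"
  shows "xi n a b \<otimes>\<^bsub>PS n\<^esub> xi n c d = xi n c d \<otimes>\<^bsub>PS n\<^esub> xi n a b"
proof -
  interpret PS: group "PS n" by (rule group_PSigma)
  have "a \<in> {1..n}" "b \<in> {1..n}" "c \<in> {1..n}" "d \<in> {1..n}" "a \<noteq> b" "c \<noteq> d"
    using ab cd by (auto simp: index_pair_def)
  then show ?thesis
    using assms xi_in_PSigma[OF ab] xi_in_PSigma[OF cd]
    by (intro PSigma_eqI[where n = n]) (simp_all add: mult_PSigma_apply letter_in_free_group xi_compute)
qed

lemma xi_commute_same_target:
  assumes ab: "index_pair n a b" and cb: "index_pair n c b" and "a \<noteq> c"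
  shows "xi n a b \<otimes>\<^bsub>PS n\<^esub> xi n c b = xi n c b \<otimes>\<^bsub>PS n\<^esub> xi n a b"
proof -
  interpret PS: group "PS n" by (rule group_PSigma)
  have "a \<in> {1..n}" "b \<in> {1..n}" "c \<in> {1..n}" "a \<noteq> b" "c \<noteq> b"
    using ab cb by (auto simp: index_pair_def)
  then show ?thesis
    using assms xi_in_PSigma[OF ab] xi_in_PSigma[OF cb]
    by (intro PSigma_eqI[where n = n]) (simp_all add: mult_PSigma_apply letter_in_free_group xi_compute)
qed

lemma xi_mccool:
  assumes ad: "index_pair n a d" and bd: "index_pair n b d" and ab: "index_pair n a b"
  shows "(xi n a d \<otimes>\<^bsub>PS n\<^esub> xi n b d) \<otimes>\<^bsub>PS n\<^esub> xi n a b = xi n a b \<otimes>\<^bsub>PS n\<^esub> (xi n a d \<otimes>\<^bsub>PS n\<^esub> xi n b d)"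
proof -
  interpret PS: group "PS n" by (rule group_PSigma)
  have xi: "xi n a d \<in> carrier (PS n)" "xi n b d \<in> carrier (PS n)" "xi n a b \<in> carrier (PS n)"
    using xi_in_PSigma ad bd ab by auto
  have r: "a \<in> {1..n}" "b \<in> {1..n}" "d \<in> {1..n}" "a \<noteq> b" "a \<noteq> d" "b \<noteq> d"
    using ab ad bd by (auto simp: index_pair_def)
  show ?thesis
  proof (rule PSigma_eqI)
    fix k assume k: "k \<in> {1..n}"
    have "((xi n a d \<otimes>\<^bsub>PS n\<^esub> xi n b d) \<otimes>\<^bsub>PS n\<^esub> xi n a b) [(k, False)]
        = xi n a d (xi n b d (xi n a b [(k, False)]))"
      "(xi n a b \<otimes>\<^bsub>PS n\<^esub> (xi n a d \<otimes>\<^bsub>PS n\<^esub> xi n b d)) [(k, False)]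
        = xi n a b (xi n a d (xi n b d [(k, False)]))"
      using xi letter_in_free_group[OF k] by (simp_all add: mult_PSigma_apply PSigma_apply_closed)
    then show "((xi n a d \<otimes>\<^bsub>PS n\<^esub> xi n b d) \<otimes>\<^bsub>PS n\<^esub> xi n a b) [(k, False)] =
        (xi n a b \<otimes>\<^bsub>PS n\<^esub> (xi n a d \<otimes>\<^bsub>PS n\<^esub> xi n b d)) [(k, False)]"
      using k r assms by (simp add: xi_compute)
  qed (use xi in simp_all)
qed

section \<open>Spanning\<close>

datatype basis_index = Swap nat nat | Fork nat nat nat

fun admissible :: "nat \<Rightarrow> basis_index \<Rightarrow> bool" where
  "admissible n (Swap i j) \<longleftrightarrow> 1 \<le> i \<and> i < j \<and> j \<le> n"
| "admissible n (Fork i j t) \<longleftrightarrow> 1 \<le> i \<and> i \<le> n \<and> i \<noteq> j \<and> i \<noteq> t \<and> 1 \<le> j \<and> j < t \<and> t \<le> n"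

fun basis_elem :: "nat \<Rightarrow> basis_index \<Rightarrow> (word \<Rightarrow> word) set" where
  "basis_elem n (Swap i j) = comm_class (PS n) (xi n i j) (xi n j i)"
| "basis_elem n (Fork i j t) = comm_class (PS n) (xi n i j) (xi n i t)"

definition basis_set :: "nat \<Rightarrow> (word \<Rightarrow> word) set set" where
  "basis_set n = basis_elem n ` {\<iota>. admissible n \<iota>}"

abbreviation basis_span :: "nat \<Rightarrow> (word \<Rightarrow> word) set set" where
  "basis_span n \<equiv> generate (Q n) (basis_set n)"

lemma basis_set_subset: "basis_set n \<subseteq> carrier (Q n)"
proof -
  interpret PS: group "PS n" by (rule group_PSigma)
  show ?thesis
  proof
    fix U assume "U \<in> basis_set n"
    then obtain \<iota> where "admissible n \<iota>" "U = basis_elem n \<iota>" by (auto simp: basis_set_def)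
    then show "U \<in> carrier (Q n)"
      by (cases \<iota>) (auto intro!: PS.comm_class_in_gr2 xi_in_PSigma simp: index_pair_def)
  qed
qed

lemma subgroup_basis_span: "subgroup (basis_span n) (Q n)"
  by (rule group.generate_is_subgroup[OF group.group_gr2[OF group_PSigma] basis_set_subset])

lemma comm_class_swap_in_basis_span:
  assumes "index_pair n a b" "index_pair n c d" "comm_class (PS n) (xi n c d) (xi n a b) \<in> basis_span n"
  shows "comm_class (PS n) (xi n a b) (xi n c d) \<in> basis_span n"
  using group.comm_class_swap[OF group_PSigma xi_in_PSigma[OF assms(1)] xi_in_PSigma[OF assms(2)]]
    subgroup.m_inv_closed[OF subgroup_basis_span assms(3)] by simp

lemma basis_elem_in_basis_span: "admissible n \<iota> \<Longrightarrow> basis_elem n \<iota> \<in> basis_span n"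
  by (auto simp: basis_set_def intro: generate.incl)

lemma swap_in_basis_span:
  assumes ab: "index_pair n a b"
  shows "comm_class (PS n) (xi n a b) (xi n b a) \<in> basis_span n"
proof (cases "a < b")
  case True
  then show ?thesis
    using basis_elem_in_basis_span[of n "Swap a b"] ab by (simp add: index_pair_def)
next
  case False
  then have "comm_class (PS n) (xi n b a) (xi n a b) \<in> basis_span n"
    using basis_elem_in_basis_span[of n "Swap b a"] ab by (simp add: index_pair_def)
  moreover have "index_pair n b a"
    using ab by (auto simp: index_pair_def)
  ultimately show ?thesis
    using comm_class_swap_in_basis_span[OF ab] by blast
qed

lemma fork_in_basis_span:
  assumes ab: "index_pair n a b" and ad: "index_pair n a d" and "b \<noteq> d"
  shows "comm_class (PS n) (xi n a b) (xi n a d) \<in> basis_span n"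
proof (cases "b < d")
  case True
  then show ?thesis
    using basis_elem_in_basis_span[of n "Fork a b d"] ab ad by (simp add: index_pair_def)
next
  case False
  then have "comm_class (PS n) (xi n a d) (xi n a b) \<in> basis_span n"
    using basis_elem_in_basis_span[of n "Fork a d b"] ab ad \<open>b \<noteq> d\<close> by (simp add: index_pair_def)
  then show ?thesis
    by (rule comm_class_swap_in_basis_span[OF ab ad])
qed

text \<open>By the McCool relation and bilinearity, \<open>[\<xi>\<^sub>a\<^sub>b, \<xi>\<^sub>b\<^sub>d] = [\<xi>\<^sub>a\<^sub>d, \<xi>\<^sub>a\<^sub>b]\<close> in \<open>gr\<^sup>2\<close>.\<close>

lemma chain_in_basis_span:
  assumes ab: "index_pair n a b" and bd: "index_pair n b d" and ad: "index_pair n a d"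
  shows "comm_class (PS n) (xi n a b) (xi n b d) \<in> basis_span n"
proof -
  interpret PS: group "PS n" by (rule group_PSigma)
  interpret Q: comm_group "Q n" by (rule PS.comm_group_gr2)
  let ?x = "xi n a d" and ?y = "xi n b d" and ?z = "xi n a b"
  have x: "?x \<in> carrier (PS n)" and y: "?y \<in> carrier (PS n)" and z: "?z \<in> carrier (PS n)"
    using xi_in_PSigma ab bd ad by auto
  have "comm_class (PS n) ?x ?z \<otimes>\<^bsub>Q n\<^esub> comm_class (PS n) ?y ?z = \<one>\<^bsub>Q n\<^esub>"
    using PS.comm_class_mult_left[OF x y z] PS.comm_class_eq_one[OF _ z xi_mccool[OF ad bd ab]] x y
    by simp
  then have "inv\<^bsub>Q n\<^esub> (comm_class (PS n) ?y ?z) = comm_class (PS n) ?x ?z"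
    by (rule Q.inv_equality) (simp_all add: PS.comm_class_in_gr2 x y z)
  then have "comm_class (PS n) ?z ?y = comm_class (PS n) ?x ?z"
    using PS.comm_class_swap[OF z y] by simp
  moreover have "comm_class (PS n) ?x ?z \<in> basis_span n"
    using fork_in_basis_span[OF ad ab] bd by (auto simp: index_pair_def)
  ultimately show ?thesis by simp
qed

lemma comm_class_in_basis_span_if_commute:
  assumes "index_pair n a b" "index_pair n c d"
    and "xi n a b \<otimes>\<^bsub>PS n\<^esub> xi n c d = xi n c d \<otimes>\<^bsub>PS n\<^esub> xi n a b"
  shows "comm_class (PS n) (xi n a b) (xi n c d) \<in> basis_span n"
  using group.comm_class_eq_one[OF group_PSigma xi_in_PSigma[OF assms(1)] xi_in_PSigma[OF assms(2)] assms(3)]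
    generate.one by simp

lemma comm_class_xi_in_basis_span:
  assumes ab: "index_pair n a b" and cd: "index_pair n c d"
  shows "comm_class (PS n) (xi n a b) (xi n c d) \<in> basis_span n"
proof -
  consider "c = a" | "c = b" | "c \<notin> {a, b}" "d = a" | "c \<notin> {a, b}" "d = b" | "c \<notin> {a, b}" "d \<notin> {a, b}"
    by blast
  then show ?thesis
  proof cases
    case 1
    show ?thesis
    proof (cases "d = b")
      case True
      then show ?thesis using 1 comm_class_in_basis_span_if_commute[OF ab cd] by simp
    next
      case False
      then show ?thesis using 1 fork_in_basis_span[OF ab] cd by simp
    qed
  next
    case 2
    show ?thesis
    proof (cases "d = a")
      case True
      then show ?thesis using 2 swap_in_basis_span[OF ab] by simp
    next
      case False
      then have "index_pair n b d" "index_pair n a d"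
        using 2 ab cd by (auto simp: index_pair_def)
      then show ?thesis using 2 chain_in_basis_span[OF ab] by simp
    qed
  next
    case 3
    have "comm_class (PS n) (xi n c a) (xi n a b) \<in> basis_span n"
      by (rule chain_in_basis_span) (use 3 ab cd in \<open>auto simp: index_pair_def\<close>)
    then show ?thesis
      using 3 comm_class_swap_in_basis_span[OF ab cd] by simp
  next
    case 4
    then show ?thesis
      using comm_class_in_basis_span_if_commute[OF ab cd] xi_commute_same_target[OF ab] cd by simp
  next
    case 5
    then show ?thesis
      using comm_class_in_basis_span_if_commute[OF ab cd] xi_commute_disjoint[OF ab cd] by simp
  qed
qed

lemma gr2_PSigma_subset_basis_span: "carrier (Q n) \<subseteq> basis_span n"
proof (rule group.gr2_subset_subgroup_gens[OF group_PSigma subgroup_basis_span])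
  show "carrier (PS n) = generate (PS n) (xi_gens n)"
    by (simp add: generate_PSigma)
  show "xi_gens n \<subseteq> carrier (PS n)"
    by (auto simp: xi_gens_def xi_in_PSigma)
  show "comm_class (PS n) s t \<in> basis_span n" if "s \<in> xi_gens n" "t \<in> xi_gens n" for s t
    using that comm_class_xi_in_basis_span by (auto simp: xi_gens_def)
qed
section \<open>Counting the basis\<close>

lemma card_less_pairs:
  fixes A :: "'a :: linorder set"
  assumes "finite A"
  shows "2 * card {(j, t). j \<in> A \<and> t \<in> A \<and> j < t} = card A * (card A - 1)"
proof -
  let ?L = "{(j, t). j \<in> A \<and> t \<in> A \<and> j < t}" and ?G = "{(j, t). j \<in> A \<and> t \<in> A \<and> t < j}"
  have fin: "finite ?L" "finite ?G"
    using assms by (auto intro: finite_subset[of _ "A \<times> A"])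
  have decomp: "A \<times> A = (?L \<union> ?G) \<union> (\<lambda>j. (j, j)) ` A"
    by auto
  have "card (A \<times> A) = card (?L \<union> ?G) + card ((\<lambda>j. (j, j)) ` A)"
    unfolding decomp by (rule card_Un_disjoint) (use fin assms in auto)
  also have "card (?L \<union> ?G) = card ?L + card ?G"
    using fin by (rule card_Un_disjoint) auto
  finally have "card A * card A = card ?L + card ?G + card A"
    by (simp add: card_cartesian_product card_image inj_on_def)
  moreover have "?G = prod.swap ` ?L"
    by auto
  then have "card ?G = card ?L"
    by (simp add: card_image)
  ultimately show ?thesis
    by (simp add: diff_mult_distrib2)
qed

lemma admissible_eq:
  "{\<iota>. admissible n \<iota>} =
     (\<lambda>(i, j). Swap i j) ` {(i, j). i \<in> {1..n} \<and> j \<in> {1..n} \<and> i < j}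
     \<union> (\<lambda>(i, j, t). Fork i j t) ` (SIGMA i:{1..n}. {(j, t). j \<in> {1..n} - {i} \<and> t \<in> {1..n} - {i} \<and> j < t})"
  (is "_ = ?S ` ?P \<union> ?F ` ?T")
proof
  show "{\<iota>. admissible n \<iota>} \<subseteq> ?S ` ?P \<union> ?F ` ?T"
  proof
    fix \<iota> assume "\<iota> \<in> {\<iota>. admissible n \<iota>}"
    then show "\<iota> \<in> ?S ` ?P \<union> ?F ` ?T"
    proof (cases \<iota>)
      case (Swap i j)
      then show ?thesis
        using \<open>\<iota> \<in> _\<close> by (intro UnI1 rev_image_eqI[of "(i, j)"]) auto
    next
      case (Fork i j t)
      then show ?thesis
        using \<open>\<iota> \<in> _\<close> by (intro UnI2 rev_image_eqI[of "(i, j, t)"]) auto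
    qed
  qed
qed auto

lemma finite_admissible: "finite {\<iota>. admissible n \<iota>}"
  unfolding admissible_eq
  by (intro finite_UnI finite_imageI finite_SigmaI) (auto intro: finite_subset[of _ "{1..n} \<times> {1..n}"])

lemma finite_basis_set: "finite (basis_set n)"
  by (simp add: basis_set_def finite_admissible)

lemma card_admissible: "2 * card {\<iota>. admissible n \<iota>} = n * (n - 1) + n * ((n - 1) * (n - 2))"
proof -
  let ?P = "{(i, j). i \<in> {1..n} \<and> j \<in> {1..n} \<and> i < j}"
  let ?R = "\<lambda>i. {(j, t). j \<in> {1..n} - {i} \<and> t \<in> {1..n} - {i} \<and> j < t}"
  have fin: "finite ?P" "\<And>i. finite (?R i)"
    by (auto intro: finite_subset[of _ "{1..n} \<times> {1..n}"])
  have "2 * card ?P = n * (n - 1)"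
    using card_less_pairs[of "{1..n}"] by simp
  moreover have "2 * card (?R i) = (n - 1) * (n - 2)" if "i \<in> {1..n}" for i
    using card_less_pairs[of "{1..n} - {i}"] that by (simp add: diff_diff_left numeral_2_eq_2)
  then have "2 * card (SIGMA i:{1..n}. ?R i) = n * ((n - 1) * (n - 2))"
    using fin by (simp add: card_SigmaI sum_distrib_left)
  moreover have "card {\<iota>. admissible n \<iota>} = card ?P + card (SIGMA i:{1..n}. ?R i)"
    unfolding admissible_eq using fin
    by (subst card_Un_disjoint) (auto simp: card_image inj_on_def)
  ultimately show ?thesis by simp
qed

section \<open>Independence\<close>

definition lin_xi :: "nat \<Rightarrow> nat \<Rightarrow> nat \<Rightarrow> nat \<Rightarrow> nat \<Rightarrow> int" where
  "lin_xi a b p r u =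
    (if p = a \<and> r = a then - of_bool (u = b) else if p = a \<and> r = b then of_bool (u = a) else 0)"

lemma fox_lin_xi: "index_pair n a b \<Longrightarrow> fox_lin n (xi n a b) = lin_xi a b"
  by (auto simp: fun_eq_iff fox_lin_def fox_matrix_def xi_letter xi_image_def lin_xi_def
      fox_letter_def jet_letter_def index_pair_def)

lemma lin_prod_lin_xi_left:
  assumes "index_pair n a b"
  shows "lin_prod n (lin_xi a b) C p r u v =
    (if p = a then - of_bool (u = b) * C a r v - of_bool (v = b) * C a r u
                   + of_bool (u = a) * C b r v + of_bool (v = a) * C b r u
     else 0)"
proof -
  have ab: "a \<in> {1..n}" "b \<in> {1..n}" "a \<noteq> b"
    using assms by (auto simp: index_pair_def)
  have "lin_prod n (lin_xi a b) C p r u v =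
      (\<Sum>k\<in>{1..n}. (if k = a then (if p = a then - of_bool (u = b) * C a r v - of_bool (v = b) * C a r u else 0) else 0)
        + (if k = b then (if p = a then of_bool (u = a) * C b r v + of_bool (v = a) * C b r u else 0) else 0))"
    unfolding lin_prod_def by (rule sum.cong) (use ab in \<open>auto simp: lin_xi_def\<close>)
  then show ?thesis
    using ab by (simp add: sum.distrib)
qed

lemma quad_coord_comm_class_xi:
  assumes ab: "index_pair n a b" and cd: "index_pair n c d"
  shows "quad_coord n (comm_class (PS n) (xi n a b) (xi n c d)) p r u v =
    (if p = c then - of_bool (u = d) * lin_xi a b c r v - of_bool (v = d) * lin_xi a b c r u
                   + of_bool (u = c) * lin_xi a b d r v + of_bool (v = c) * lin_xi a b d r u
     else 0)
  - (if p = a then - of_bool (u = b) * lin_xi c d a r v - of_bool (v = b) * lin_xi c d a r u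
                   + of_bool (u = a) * lin_xi c d b r v + of_bool (v = a) * lin_xi c d b r u
     else 0)"
  using quad_coord_comm_class[OF xi_in_PSigma[OF ab] xi_in_PSigma[OF cd]]
  by (simp add: fox_lin_xi ab cd lin_prod_lin_xi_left)

text \<open>The entry of the quadratic part read off by \<open>coord n U \<iota>\<close> vanishes on every basis element
  except \<open>basis_elem n \<iota>\<close>.\<close>

fun coord :: "nat \<Rightarrow> (word \<Rightarrow> word) set \<Rightarrow> basis_index \<Rightarrow> int" where
  "coord n U (Swap i j) = quad_coord n U i j i i"
| "coord n U (Fork i j t) = quad_coord n U i t i j"

lemma coord_basis_elem_self: "admissible n \<iota> \<Longrightarrow> coord n (basis_elem n \<iota>) \<iota> \<noteq> 0"
  by (cases \<iota>) (auto simp: quad_coord_comm_class_xi index_pair_def lin_xi_def)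

lemma coord_basis_elem_other:
  "admissible n \<iota> \<Longrightarrow> admissible n \<iota>' \<Longrightarrow> \<iota> \<noteq> \<iota>' \<Longrightarrow> coord n (basis_elem n \<iota>') \<iota> = 0"
  by (cases \<iota>; cases \<iota>')
    (auto simp: quad_coord_comm_class_xi index_pair_def lin_xi_def)

lemma coord_hom: "(\<lambda>U. coord n U \<iota>) \<in> hom (Q n) integer_group"
  by (rule homI) (cases \<iota>; simp add: quad_coord_mult)+

lemma coord_finprod:
  "coord n (finprod (Q n) (\<lambda>b. b [^]\<^bsub>Q n\<^esub> c b) (basis_set n)) \<iota> = (\<Sum>b\<in>basis_set n. c b * coord n b \<iota>)"
proof -
  interpret Q: comm_group "Q n" by (rule group.comm_group_gr2[OF group_PSigma])
  interpret coord: group_hom "Q n" integer_group "\<lambda>U. coord n U \<iota>"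
    by (simp add: group_hom_def group_hom_axioms_def Q.is_group coord_hom)
  have "(\<lambda>b. b [^]\<^bsub>Q n\<^esub> c b) \<in> basis_set n \<rightarrow> carrier (Q n)"
    using basis_set_subset by auto
  then have "coord n (finprod (Q n) (\<lambda>b. b [^]\<^bsub>Q n\<^esub> c b) (basis_set n)) \<iota>
      = (\<Sum>b\<in>basis_set n. coord n (b [^]\<^bsub>Q n\<^esub> c b) \<iota>)"
    by (rule hom_integer_group_finprod[OF Q.comm_group_axioms coord_hom finite_basis_set])
  also have "\<dots> = (\<Sum>b\<in>basis_set n. c b * coord n b \<iota>)"
    using basis_set_subset coord.hom_int_pow by (intro sum.cong) auto
  finally show ?thesis .
qed

lemma coord_finprod_basis_elem:
  fixes c :: "(word \<Rightarrow> word) set \<Rightarrow> int"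
  assumes "admissible n \<iota>"
  shows "coord n (finprod (Q n) (\<lambda>b. b [^]\<^bsub>Q n\<^esub> c b) (basis_set n)) \<iota>
    = c (basis_elem n \<iota>) * coord n (basis_elem n \<iota>) \<iota>"
proof -
  have "(\<Sum>b\<in>basis_set n. c b * coord n b \<iota>) = (\<Sum>b\<in>basis_set n. if b = basis_elem n \<iota> then c b * coord n b \<iota> else 0)"
    using coord_basis_elem_other[OF assms] by (intro sum.cong) (auto simp: basis_set_def)
  also have "\<dots> = c (basis_elem n \<iota>) * coord n (basis_elem n \<iota>) \<iota>"
    using assms finite_basis_set by (simp add: basis_set_def)
  finally show ?thesis
    by (simp add: coord_finprod)
qed

lemma inj_on_basis_elem: "inj_on (basis_elem n) {\<iota>. admissible n \<iota>}"
  using coord_basis_elem_self coord_basis_elem_other by (intro inj_onI) (metis mem_Collect_eq)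

lemma finprod_basis_set_inj:
  fixes c c' :: "(word \<Rightarrow> word) set \<Rightarrow> int"
  assumes "c \<in> extensional (basis_set n)" "c' \<in> extensional (basis_set n)"
    and "finprod (Q n) (\<lambda>b. b [^]\<^bsub>Q n\<^esub> c b) (basis_set n) = finprod (Q n) (\<lambda>b. b [^]\<^bsub>Q n\<^esub> c' b) (basis_set n)"
  shows "c = c'"
proof (rule extensionalityI[OF assms(1,2)])
  fix b assume "b \<in> basis_set n"
  then obtain \<iota> where \<iota>: "admissible n \<iota>" "b = basis_elem n \<iota>"
    by (auto simp: basis_set_def)
  then have "c b * coord n b \<iota> = coord n (finprod (Q n) (\<lambda>b. b [^]\<^bsub>Q n\<^esub> c b) (basis_set n)) \<iota>"
    using coord_finprod_basis_elem[OF \<iota>(1), of c] by simp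
  also have "\<dots> = c' b * coord n b \<iota>"
    using coord_finprod_basis_elem[OF \<iota>(1), of c'] assms(3) \<iota>(2) by simp
  finally have "c b * coord n b \<iota> = c' b * coord n b \<iota>" .
  then show "c b = c' b"
    using coord_basis_elem_self[OF \<iota>(1)] \<iota>(2) by auto
qed

lemma abelian_basis_basis_set: "abelian_basis (Q n) (basis_set n)"
  unfolding abelian_basis_def
proof (intro conjI ballI finite_basis_set basis_set_subset)
  interpret Q: comm_group "Q n" by (rule group.comm_group_gr2[OF group_PSigma])
  fix g assume "g \<in> carrier (Q n)"
  then have "g \<in> basis_span n"
    using gr2_PSigma_subset_basis_span by blast
  then obtain c :: "_ \<Rightarrow> int" where "g = finprod (Q n) (\<lambda>b. b [^]\<^bsub>Q n\<^esub> c b) (basis_set n)"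
    using Q.generate_eq_finprod_int_pow[OF finite_basis_set basis_set_subset] by blast
  also have "\<dots> = finprod (Q n) (\<lambda>b. b [^]\<^bsub>Q n\<^esub> restrict c (basis_set n) b) (basis_set n)"
    using basis_set_subset by (intro Q.finprod_cong') (auto simp: Pi_iff)
  finally have g: "g = finprod (Q n) (\<lambda>b. b [^]\<^bsub>Q n\<^esub> restrict c (basis_set n) b) (basis_set n)" .
  show "\<exists>!c :: _ \<Rightarrow> int. c \<in> extensional (basis_set n)
      \<and> g = finprod (Q n) (\<lambda>b. b [^]\<^bsub>Q n\<^esub> c b) (basis_set n)"
  proof (rule ex1I[of _ "restrict c (basis_set n)"])
    fix c' :: "_ \<Rightarrow> int"
    assume c': "c' \<in> extensional (basis_set n) \<and> g = finprod (Q n) (\<lambda>b. b [^]\<^bsub>Q n\<^esub> c' b) (basis_set n)"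
    show "c' = restrict c (basis_set n)"
      by (rule finprod_basis_set_inj[OF conjunct1[OF c'] restrict_extensional trans[OF sym[OF conjunct2[OF c']] g]])
  qed (intro conjI restrict_extensional g)
qed

lemma card_basis_set:
  assumes "n \<ge> 2"
  shows "card (basis_set n) = (n - 1) * r_n n 2" "card (basis_set n) = n * (n - 1)^2 div 2"
proof -
  obtain m where m: "n = m + 2"
    using assms le_Suc_ex by (metis add.commute)
  have card: "2 * card (basis_set n) = n * (n - 1)^2"
    using card_admissible[of n] m
    by (simp add: basis_set_def card_image[OF inj_on_basis_elem] power2_eq_square algebra_simps)
  have r: "2 * r_n n 2 = n * (n - 1)"
    using m by (simp add: r_n_def power2_eq_square algebra_simps)
  have "2 * card (basis_set n) = 2 * ((n - 1) * r_n n 2)"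
    unfolding card mult.left_commute[of 2] r by (simp add: power2_eq_square mult_ac)
  then show "card (basis_set n) = (n - 1) * r_n n 2"
    by simp
  show "card (basis_set n) = n * (n - 1)^2 div 2"
    using card by simp
qed

lemma basis_set_eq:
  "basis_set n = {comm_class (PS n) (xi n i j) (xi n j i) | i j. 1 \<le> i \<and> i < j \<and> j \<le> n}
     \<union> {comm_class (PS n) (xi n i j) (xi n i t) | i j t.
          1 \<le> i \<and> i \<le> n \<and> i \<noteq> j \<and> i \<noteq> t \<and> 1 \<le> j \<and> j < t \<and> t \<le> n}"
  (is "_ = ?X \<union> ?Y")
proof
  show "basis_set n \<subseteq> ?X \<union> ?Y"
  proof
    fix U assume "U \<in> basis_set n"
    then obtain \<iota> where "admissible n \<iota>" "U = basis_elem n \<iota>"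
      by (auto simp: basis_set_def)
    then show "U \<in> ?X \<union> ?Y"
      by (cases \<iota>) force+
  qed
  show "?X \<union> ?Y \<subseteq> basis_set n"
  proof
    fix U assume "U \<in> ?X \<union> ?Y"
    then show "U \<in> basis_set n"
    proof
      assume "U \<in> ?X"
      then obtain i j where "U = basis_elem n (Swap i j)" "admissible n (Swap i j)"
        by auto
      then show ?thesis
        unfolding basis_set_def by (intro image_eqI[where x = "Swap i j"]) auto
    next
      assume "U \<in> ?Y"
      then obtain i j t where "U = basis_elem n (Fork i j t)" "admissible n (Fork i j t)"
        by auto
      then show ?thesis
        unfolding basis_set_def by (intro image_eqI[where x = "Fork i j t"]) auto
    qed
  qed
qed

theorem theorem3p1p2:
  fixes n :: nat
  assumes "n \<ge> 4"
  defines "G \<equiv> PSigma n"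
  defines "B \<equiv> {comm_class G (xi n i j) (xi n j i) | i j. 1 \<le> i \<and> i < j \<and> j \<le> n}
              \<union> {comm_class G (xi n i j) (xi n i t) | i j t.
                   1 \<le> i \<and> i \<le> n \<and> i \<noteq> j \<and> i \<noteq> t \<and> 1 \<le> j \<and> j < t \<and> t \<le> n}"
  shows "comm_group (gr2 G) \<and> abelian_basis (gr2 G) B
         \<and> card B = (n - 1) * r_n n 2 \<and> card B = n * (n - 1)^2 div 2"
proof -
  have "B = basis_set n"
    unfolding B_def G_def basis_set_eq ..
  moreover have "n \<ge> 2"
    using assms(1) by simp
  ultimately show ?thesis
    unfolding G_def
    using group.comm_group_gr2[OF group_PSigma] abelian_basis_basis_set card_basis_set by simp
qed

end
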